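(* Let $X$ be a Banach lattice and $(C_n)$ an absolute FDD of $[C_n]\subseteq X$. Then every unconditional and shrinking FDD $(B_n)$ with $[B_n]\subseteq[C_n]$ can be blocked to be absolute.
   Context: An FDD (finite-dimensional decomposition) of a closed subspace $F$ is a sequence $(F_n)$ of finite-dimensional subspaces such that every $x\in F$ has a unique norm-convergent expansion $x=\sum_n x_n$ with $x_n\in F_n$; $[F_n]$ denotes the closed span. In a Banach lattice, an FDD $(F_n)$ is absolute if there is $A\ge1$ with $\|\sum_{n=1}^m|x_n|\|\le A\|\sum_{n=1}^mx_n\|$ for all $m$ and all $x_n\in F_n$. A blocking of $(F_n)$ is a decomposition $(F'_j)$ with $F'_j=F_{k_{j-1}+1}\oplus\cdots\oplus F_{k_j}$ for some $0=k_0<k_1<\cdots$. Unconditional and shrinking have their standard Banach space meaning. *)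

theory Defs
  imports "HOL-Analysis.Analysis"
begin

class banach_lattice = banach + lattice + ordered_real_vector +
  assumes lattice_norm: "sup x (- x) \<le> sup y (- y) \<Longrightarrow> norm x \<le> norm y"

definition labs :: "'a::banach_lattice \<Rightarrow> 'a" where
  "labs x = sup x (- x)"

definition cspan :: "(nat \<Rightarrow> 'a::real_normed_vector set) \<Rightarrow> 'a set" where
  "cspan Fs = closure (span (\<Union>n. Fs n))"

definition fdd_of :: "(nat \<Rightarrow> 'a::real_normed_vector set) \<Rightarrow> 'a set \<Rightarrow> bool" where
  "fdd_of Fs F \<longleftrightarrow> closed F \<and> subspace F \<and>
     (\<forall>n. (\<exists>S. finite S \<and> Fs n = span S) \<and> Fs n \<subseteq> F) \<and>
     (\<forall>x\<in>F. \<exists>!xs. (\<forall>n. xs n \<in> Fs n) \<and> xs sums x)"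

definition is_fdd :: "(nat \<Rightarrow> 'a::real_normed_vector set) \<Rightarrow> bool" where
  "is_fdd Fs \<longleftrightarrow> fdd_of Fs (cspan Fs)"

definition absolute_fdd :: "(nat \<Rightarrow> 'a::banach_lattice set) \<Rightarrow> bool" where
  "absolute_fdd Fs \<longleftrightarrow> is_fdd Fs \<and> (\<exists>A\<ge>1. \<forall>m xs. (\<forall>n. xs n \<in> Fs n) \<longrightarrow>
      norm (\<Sum>n<m. labs (xs n)) \<le> A * norm (\<Sum>n<m. xs n))"

definition unconditional_fdd :: "(nat \<Rightarrow> 'a::real_normed_vector set) \<Rightarrow> bool" where
  "unconditional_fdd Fs \<longleftrightarrow> is_fdd Fs \<and>
     (\<forall>x\<in>cspan Fs. \<forall>xs. (\<forall>n. xs n \<in> Fs n) \<and> xs sums x \<longrightarrow>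
        (\<forall>p. bij p \<longrightarrow> (\<lambda>n. xs (p n)) sums x))"

definition shrinking_fdd :: "(nat \<Rightarrow> 'a::real_normed_vector set) \<Rightarrow> bool" where
  "shrinking_fdd Fs \<longleftrightarrow> is_fdd Fs \<and>
     (\<forall>f::'a \<Rightarrow> real. linear f \<and> (\<exists>K. \<forall>x\<in>cspan Fs. \<bar>f x\<bar> \<le> K * norm x) \<longrightarrow>
        (\<lambda>m. Sup {\<bar>f x\<bar> | x. x \<in> span (\<Union>n\<in>{m..}. Fs n) \<and> norm x \<le> 1})
          \<longlonglongrightarrow> 0)"

text \<open>Blocking of (Fs n) along 0 = k 0 < k 1 < ... (0-based indices):
block j = F_{k j} + ... + F_{k (j+1) - 1}.\<close>
definition blocking :: "(nat \<Rightarrow> 'a::real_normed_vector set) \<Rightarrow> (nat \<Rightarrow> nat) \<Rightarrow> nat \<Rightarrow> 'a set" where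
  "blocking Fs k j = span (\<Union>n\<in>{k j..<k (Suc j)}. Fs n)"

end

theory Submission
  imports Defs
begin

(* Let A be the absolute constant of (C_n) and K the unconditional constant of (B_n); K is finite
   by Zabreiko's lemma applied to the countably subadditive seminorm
   x \<mapsto> sup_S \<parallel>\<Sum>n\<in>S. x_n\<parallel>.  Choose the block boundaries k_j and indices P_j of (C_n)
   alternately, so that every x in the j-th block satisfies \<parallel>Q_{P_j} x\<parallel> \<le> 2^-j \<parallel>x\<parallel> and
   \<parallel>x - Q_{P_{j+2}} x\<parallel> \<le> 2^-j \<parallel>x\<parallel>, where Q_p is the p-th partial sum projection of (C_n):
   the first is possible because (B_n) is shrinking and Q_p has finite rank, the second because
   the block is finite-dimensional.  Then x_j agrees, up to an error e_j with
   \<Sum>j \<parallel>e_j\<parallel> \<le> 4K \<parallel>\<Sum>j x_j\<parallel>, with a vector supported on the C-window [P_j, P_{j+2}).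
   Windows of indices of equal parity are disjoint, so the absolute estimate of (C_n) and the
   unconditionality of (B_n) give \<parallel>\<Sum>j |x_j|\<parallel> \<le> (10AK + 4K) \<parallel>\<Sum>j x_j\<parallel>.  This estimate
   also forces block expansions to be unique, so the blocking is an absolute FDD. *)

section \<open>Absolute values in Banach lattices\<close>

lemma labs_upper: "x \<le> labs x" "- x \<le> labs x"
  by (simp_all add: labs_def)

lemma labs_least: "x \<le> y \<Longrightarrow> - x \<le> y \<Longrightarrow> labs x \<le> y"
  by (simp add: labs_def)

lemma labs_nonneg: "0 \<le> labs (x::'a::banach_lattice)"
proof -
  have "x + - x \<le> labs x + labs x" using labs_upper by (rule add_mono)
  then have "0 \<le> (1/2::real) *\<^sub>R (labs x + labs x)" by (intro scaleR_nonneg_nonneg) simp_all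
  also have "(1/2::real) *\<^sub>R (labs x + labs x) = labs x"
    by (simp add: scaleR_add_left[symmetric])
  finally show ?thesis .
qed

lemma labs_triangle: "labs (x + y) \<le> labs x + labs (y::'a::banach_lattice)"
  by (rule labs_least)
     (use add_mono[OF labs_upper(1) labs_upper(1), of x y]
          add_mono[OF labs_upper(2) labs_upper(2), of x y] in \<open>simp_all add: add.commute\<close>)

lemma labs_of_nonneg: "0 \<le> x \<Longrightarrow> labs (x::'a::banach_lattice) = x"
  unfolding labs_def by (rule sup_absorb1) (meson neg_le_0_iff_le order_trans)

lemma labs_zero [simp]: "labs (0::'a::banach_lattice) = 0"
  by (simp add: labs_of_nonneg)

lemma norm_labs [simp]: "norm (labs x) = norm (x::'a::banach_lattice)"
proof -
  have "sup (labs x) (- labs x) = sup x (- x)"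
    using labs_of_nonneg[OF labs_nonneg, of x] by (simp add: labs_def)
  then show ?thesis using lattice_norm[of "labs x" x] lattice_norm[of x "labs x"] by simp
qed

lemma norm_mono_nonneg: "0 \<le> a \<Longrightarrow> a \<le> b \<Longrightarrow> norm a \<le> norm (b::'a::banach_lattice)"
proof -
  assume a: "0 \<le> a" "a \<le> b"
  then have "sup a (- a) \<le> sup b (- b)"
    using labs_of_nonneg[OF a(1)] labs_of_nonneg[OF order_trans[OF a]] by (simp add: labs_def)
  then show ?thesis by (rule lattice_norm)
qed

lemma labs_sum_le: "labs (\<Sum>i\<in>I. f i) \<le> (\<Sum>i\<in>I. labs (f i :: 'a::banach_lattice))"
proof (induction I rule: infinite_finite_induct)
  case (insert i I)
  then show ?case using labs_triangle[of "f i" "sum f I"] by (simp add: order_trans add_left_mono)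
qed (auto simp: labs_of_nonneg)

lemma sum_labs_nonneg: "0 \<le> (\<Sum>i\<in>I. labs (f i :: 'a::banach_lattice))"
  by (simp add: sum_nonneg labs_nonneg)

lemma labs_le_sum_labs:
  "finite I \<Longrightarrow> i \<in> I \<Longrightarrow> labs (f i) \<le> (\<Sum>i\<in>I. labs (f i :: 'a::banach_lattice))"
  using sum.remove[of I i "\<lambda>i. labs (f i)"] sum_labs_nonneg[of f "I - {i}"]
  by (simp add: add_increasing2)

lemma labs_le_sum_labs_add_labs_diff:
  "labs x \<le> (\<Sum>i\<in>I. labs (f i)) + labs (x - (\<Sum>i\<in>I. f i :: 'a::banach_lattice))"
proof -
  have "labs x \<le> labs (\<Sum>i\<in>I. f i) + labs (x - (\<Sum>i\<in>I. f i))"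
    using labs_triangle[of "\<Sum>i\<in>I. f i" "x - (\<Sum>i\<in>I. f i)"] by simp
  then show ?thesis using labs_sum_le[of f I] by (meson add_right_mono order_trans)
qed

section \<open>Finite-dimensional subspaces\<close>

lemma norm_scaleR_add_lower_bound:
  fixes V :: "'a::real_normed_vector set"
  assumes "closed V" "subspace V" "v \<notin> V"
  shows "\<exists>d>0. \<forall>a. \<forall>u\<in>V. \<bar>a\<bar> * d \<le> norm (a *\<^sub>R v + u)"
proof -
  have ne: "V \<noteq> {}" using assms(2) subspace_0 by blast
  define d where "d = infdist v V"
  have d: "d > 0" unfolding d_def by (rule infdist_pos_not_in_closed[OF assms(1) ne assms(3)])
  have "\<bar>a\<bar> * d \<le> norm (a *\<^sub>R v + u)" if u: "u \<in> V" for a u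
  proof (cases "a = 0")
    case False
    have "- ((1/a) *\<^sub>R u) \<in> V" using u assms(2) by (simp add: subspace_neg subspace_scale)
    then have "d \<le> norm (v + (1/a) *\<^sub>R u)" unfolding d_def using infdist_le by (fastforce simp: dist_norm)
    then have "\<bar>a\<bar> * d \<le> norm (a *\<^sub>R (v + (1/a) *\<^sub>R u))" by (simp add: mult_left_mono)
    also have "a *\<^sub>R (v + (1/a) *\<^sub>R u) = a *\<^sub>R v + u" using False by (simp add: scaleR_add_right)
    finally show ?thesis .
  qed simp
  then show ?thesis using d by blast
qed

lemma Cauchy_of_dist_le:
  fixes a :: "nat \<Rightarrow> 'a::metric_space" and f :: "nat \<Rightarrow> 'b::metric_space"
  assumes d: "d > 0" and le: "\<And>n m. d * dist (a n) (a m) \<le> dist (f n) (f m)" and f: "Cauchy f"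
  shows "Cauchy a"
proof (rule metric_CauchyI)
  fix e :: real assume "e > 0"
  then obtain M where M: "\<forall>m\<ge>M. \<forall>n\<ge>M. dist (f m) (f n) < e * d"
    using f d unfolding Cauchy_def by (meson mult_pos_pos)
  have "dist (a m) (a n) < e" if "m \<ge> M" "n \<ge> M" for m n
  proof -
    have "d * dist (a m) (a n) < d * e" using M that le[of m n] by (fastforce simp: mult.commute)
    then show ?thesis using d by simp
  qed
  then show "\<exists>M. \<forall>m\<ge>M. \<forall>n\<ge>M. dist (a m) (a n) < e" by blast
qed

lemma closed_span_finite:
  fixes S :: "'a::real_normed_vector set"
  assumes "finite S" shows "closed (span S)"
  using assms
proof (induction S rule: finite_induct)
  case (insert v S)
  show ?case
  proof (cases "v \<in> span S")
    case True then show ?thesis using insert by (simp add: span_redundant)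
  next
    case False
    obtain d where d: "d > 0" "\<And>a u. u \<in> span S \<Longrightarrow> \<bar>a\<bar> * d \<le> norm (a *\<^sub>R v + u)"
      using norm_scaleR_add_lower_bound[OF insert(3) subspace_span False] by blast
    show ?thesis unfolding closed_sequential_limits
    proof (intro allI impI, elim conjE)
      fix f l assume f: "\<forall>n. f n \<in> span (insert v S)" "f \<longlonglongrightarrow> l"
      then have "\<forall>n. \<exists>a. f n - a *\<^sub>R v \<in> span S" using span_breakdown_eq by blast
      then obtain a where a: "\<And>n. f n - a n *\<^sub>R v \<in> span S" by metis
      have "d * dist (a n) (a m) \<le> dist (f n) (f m)" for n m
      proof -
        have "(f n - a n *\<^sub>R v) - (f m - a m *\<^sub>R v) \<in> span S" using a span_diff by blast
        from d(2)[OF this, of "a n - a m"] show ?thesis by (simp add: algebra_simps dist_norm dist_real_def)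
      qed
      then have "Cauchy a" using Cauchy_of_dist_le[OF d(1) _ LIMSEQ_imp_Cauchy[OF f(2)]] by blast
      then obtain \<alpha> where "a \<longlonglongrightarrow> \<alpha>" using Cauchy_convergent_iff convergent_def by blast
      then have "(\<lambda>n. f n - a n *\<^sub>R v) \<longlonglongrightarrow> l - \<alpha> *\<^sub>R v" by (intro tendsto_intros f(2))
      then have "l - \<alpha> *\<^sub>R v \<in> span S"
        using insert(3) a unfolding closed_sequential_limits by (elim allE impE) auto
      then show "l \<in> span (insert v S)" using span_breakdown_eq by blast
    qed
  qed
qed simp

lemma finite_basis_subset:
  fixes S :: "'a::real_vector set"
  assumes "finite S"
  obtains T where "finite T" "independent T" "span T = span S"
proof -
  obtain T where T: "T \<subseteq> S" "independent T" "S \<subseteq> span T" by (rule maximal_independent_subset)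
  have "span T = span S"
    using span_mono[OF T(1)] span_mono[OF T(3)] by (simp add: span_span subset_antisym)
  then show ?thesis using that T assms finite_subset by blast
qed

lemma representation_bounded:
  fixes T :: "'a::real_normed_vector set"
  assumes "finite T" "independent T"
  shows "\<exists>M\<ge>0. \<forall>w\<in>span T. \<forall>t\<in>T. \<bar>representation T w t\<bar> \<le> M * norm w"
proof -
  have "\<forall>t\<in>T. \<exists>d>0. \<forall>a. \<forall>u\<in>span (T - {t}). \<bar>a\<bar> * d \<le> norm (a *\<^sub>R t + u)"
  proof
    fix t assume "t \<in> T"
    then have "t \<notin> span (T - {t})" using assms(2) by (simp add: dependent_def)
    then show "\<exists>d>0. \<forall>a. \<forall>u\<in>span (T - {t}). \<bar>a\<bar> * d \<le> norm (a *\<^sub>R t + u)"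
      by (intro norm_scaleR_add_lower_bound closed_span_finite subspace_span) (use assms in auto)
  qed
  then obtain d where "\<forall>t\<in>T. d t > 0 \<and> (\<forall>a. \<forall>u\<in>span (T - {t}). \<bar>a\<bar> * d t \<le> norm (a *\<^sub>R t + u))"
    using bchoice[OF \<open>\<forall>t\<in>T. _\<close>] by blast
  then have d: "\<And>t. t \<in> T \<Longrightarrow> d t > 0"
    "\<And>t a u. t \<in> T \<Longrightarrow> u \<in> span (T - {t}) \<Longrightarrow> \<bar>a\<bar> * d t \<le> norm (a *\<^sub>R t + u)"
    by blast+
  define M where "M = (\<Sum>t\<in>T. 1 / d t)"
  have "\<bar>representation T w t\<bar> \<le> M * norm w" if w: "w \<in> span T" and t: "t \<in> T" for w t
  proof -
    let ?r = "representation T w"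
    have "w = (\<Sum>s\<in>T. ?r s *\<^sub>R s)" using sum_representation_eq[OF assms(2) w assms(1)] by simp
    also have "\<dots> = ?r t *\<^sub>R t + (\<Sum>s\<in>T - {t}. ?r s *\<^sub>R s)" using sum.remove[OF assms(1) t] by simp
    finally have weq: "w = ?r t *\<^sub>R t + (\<Sum>s\<in>T - {t}. ?r s *\<^sub>R s)" .
    have "(\<Sum>s\<in>T - {t}. ?r s *\<^sub>R s) \<in> span (T - {t})"
      by (intro span_sum span_scale span_base) auto
    from d(2)[OF t this, of "?r t"] weq have "\<bar>?r t\<bar> * d t \<le> norm w" by simp
    then have "\<bar>?r t\<bar> \<le> (1 / d t) * norm w" using d(1)[OF t] by (simp add: field_simps)
    also have "\<dots> \<le> M * norm w"
      unfolding M_def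
      by (rule mult_right_mono[OF member_le_sum]) (use t assms(1) d(1) in \<open>auto simp: less_imp_le\<close>)
    finally show ?thesis .
  qed
  moreover have "M \<ge> 0" unfolding M_def using d(1) by (simp add: sum_nonneg less_imp_le)
  ultimately show ?thesis by blast
qed

lemma linear_extension_from_subspace:
  fixes g :: "'a::real_vector \<Rightarrow> 'b::real_vector"
  assumes Z: "subspace Z"
    and add: "\<And>x y. x \<in> Z \<Longrightarrow> y \<in> Z \<Longrightarrow> g (x + y) = g x + g y"
    and scale: "\<And>c x. x \<in> Z \<Longrightarrow> g (c *\<^sub>R x) = c *\<^sub>R g x"
  obtains f where "linear f" "\<And>x. x \<in> Z \<Longrightarrow> f x = g x"
proof -
  obtain B where B: "B \<subseteq> Z" "independent B" "Z \<subseteq> span B" by (rule maximal_independent_subset)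
  define f where "f = construct B g"
  have lin: "linear f" unfolding f_def by (rule linear_construct[OF B(2)])
  have "span B \<subseteq> {x \<in> Z. f x = g x}"
  proof (rule span_minimal)
    show "B \<subseteq> {x \<in> Z. f x = g x}" using B(1) construct_basis[OF B(2)] by (auto simp: f_def)
    have "g 0 = 0" using scale[of 0 0] Z subspace_0 by auto
    then show "subspace {x \<in> Z. f x = g x}"
      using Z add scale linear_0[OF lin] linear_add[OF lin] linear_scale[OF lin]
      unfolding subspace_def by auto
  qed
  then show ?thesis using that lin B(3) by blast
qed

lemma norm_additive_on_span_le:
  fixes g :: "'a::real_normed_vector \<Rightarrow> 'b::real_normed_vector"
  assumes T: "finite T" "independent T"
    and M: "\<forall>w\<in>span T. \<forall>t\<in>T. \<bar>representation T w t\<bar> \<le> M * norm w"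
    and add: "\<And>x y. x \<in> span T \<Longrightarrow> y \<in> span T \<Longrightarrow> g (x + y) = g x + g y"
    and scale: "\<And>c x. x \<in> span T \<Longrightarrow> g (c *\<^sub>R x) = c *\<^sub>R g x"
    and x: "x \<in> span T"
  shows "norm (g x) \<le> M * norm x * (\<Sum>t\<in>T. norm (g t))"
proof -
  obtain f where f: "linear f" "\<And>x. x \<in> span T \<Longrightarrow> f x = g x"
    using linear_extension_from_subspace[OF subspace_span add scale] by blast
  have "g x = f (\<Sum>t\<in>T. representation T x t *\<^sub>R t)"
    using sum_representation_eq[OF T(2) x T(1)] f(2)[OF x] by simp
  also have "\<dots> = (\<Sum>t\<in>T. representation T x t *\<^sub>R g t)"
    by (simp add: linear_sum[OF f(1)] linear_scale[OF f(1)] f(2) span_base)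
  finally have "g x = (\<Sum>t\<in>T. representation T x t *\<^sub>R g t)" .
  then have "norm (g x) \<le> (\<Sum>t\<in>T. norm (representation T x t *\<^sub>R g t))" using norm_sum by metis
  also have "\<dots> = (\<Sum>t\<in>T. \<bar>representation T x t\<bar> * norm (g t))" by simp
  also have "\<dots> \<le> (\<Sum>t\<in>T. M * norm x * norm (g t))"
    by (intro sum_mono mult_right_mono) (use M x in auto)
  finally show ?thesis by (simp add: sum_distrib_left)
qed

lemma eventually_uniformly_small_on_finite_span:
  fixes R :: "nat \<Rightarrow> 'a::real_normed_vector \<Rightarrow> 'b::real_normed_vector"
  assumes S: "finite S"
    and add: "\<And>p x y. x \<in> span S \<Longrightarrow> y \<in> span S \<Longrightarrow> R p (x + y) = R p x + R p y"
    and scale: "\<And>p c x. x \<in> span S \<Longrightarrow> R p (c *\<^sub>R x) = c *\<^sub>R R p x"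
    and lim: "\<And>x. x \<in> span S \<Longrightarrow> (\<lambda>p. R p x) \<longlonglongrightarrow> 0"
    and e: "e > 0"
  shows "eventually (\<lambda>p. \<forall>x\<in>span S. norm (R p x) \<le> e * norm x) sequentially"
proof -
  obtain T where T: "finite T" "independent T" "span T = span S"
    using finite_basis_subset[OF S] by blast
  obtain M where M: "M \<ge> 0" "\<forall>w\<in>span T. \<forall>t\<in>T. \<bar>representation T w t\<bar> \<le> M * norm w"
    using representation_bounded[OF T(1,2)] by blast
  have "(\<lambda>p. M * (\<Sum>t\<in>T. norm (R p t))) \<longlonglongrightarrow> M * (\<Sum>t\<in>T. norm (0::'b))"
    using T(3) by (intro tendsto_intros lim) (auto intro: span_base)
  then have "eventually (\<lambda>p. M * (\<Sum>t\<in>T. norm (R p t)) < e) sequentially"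
    using e by (simp add: order_tendsto_iff)
  then show ?thesis
  proof (rule eventually_mono, intro ballI)
    fix p x assume small: "M * (\<Sum>t\<in>T. norm (R p t)) < e" and x: "x \<in> span S"
    have "norm (R p x) \<le> M * norm x * (\<Sum>t\<in>T. norm (R p t))"
      by (rule norm_additive_on_span_le[OF T(1,2) M(2)]) (use T(3) add scale x in auto)
    also have "\<dots> = norm x * (M * (\<Sum>t\<in>T. norm (R p t)))" by (simp add: mult_ac)
    also have "\<dots> \<le> norm x * e" using small by (simp add: mult_left_mono)
    finally show "norm (R p x) \<le> e * norm x" by (simp add: mult.commute)
  qed
qed

section \<open>Coordinates and partial sum projections\<close>

(* Coordinates are meaningful only for x \<in> cspan Fs. *)
definition coord :: "(nat \<Rightarrow> 'a::real_normed_vector set) \<Rightarrow> 'a \<Rightarrow> nat \<Rightarrow> 'a" where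
  "coord Fs x = (THE xs. (\<forall>n. xs n \<in> Fs n) \<and> xs sums x)"

lemma is_fddD:
  assumes "is_fdd Fs"
  shows "closed (cspan Fs)" "\<And>n. \<exists>S. finite S \<and> Fs n = span S"
    "\<And>x. x \<in> cspan Fs \<Longrightarrow> \<exists>!xs. (\<forall>n. xs n \<in> Fs n) \<and> xs sums x"
  using assms unfolding is_fdd_def fdd_of_def by blast+

lemma fdd_component_generators:
  assumes "is_fdd Fs"
  obtains S where "\<And>n. finite (S n)" "\<And>n. Fs n = span (S n)"
proof -
  have "\<forall>n. \<exists>S. finite S \<and> Fs n = span S" using is_fddD(2)[OF assms] by blast
  then obtain S where "\<forall>n. finite (S n) \<and> Fs n = span (S n)" using choice by metis
  then show ?thesis using that by blast
qed

lemma subspace_fdd_component: "is_fdd Fs \<Longrightarrow> subspace (Fs n)"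
  using is_fddD(2) by (metis subspace_span)

lemma closed_fdd_component: "is_fdd Fs \<Longrightarrow> closed (Fs n)"
  using is_fddD(2)[of Fs n] closed_span_finite by metis

lemma span_subset_cspan: "span (\<Union>n\<in>I. Fs n) \<subseteq> cspan Fs"
  unfolding cspan_def using closure_subset span_mono[of "\<Union>n\<in>I. Fs n" "\<Union>n. Fs n"] by blast

lemma component_subset_cspan: "Fs n \<subseteq> cspan Fs"
  using span_subset_cspan[where I="{n}"] span_superset by fastforce

lemma subspace_closure:
  fixes S :: "'a::real_normed_vector set"
  assumes "subspace S" shows "subspace (closure S)"
  unfolding subspace_def
proof (intro conjI ballI allI)
  show "0 \<in> closure S" using assms closure_subset subspace_0 by blast
next
  fix x y assume "x \<in> closure S" "y \<in> closure S"
  then obtain f g where f: "\<And>n. f n \<in> S" "f \<longlonglongrightarrow> x" and g: "\<And>n. g n \<in> S" "g \<longlonglongrightarrow> y"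
    by (meson closure_sequential)
  have "f n + g n \<in> S" for n using f g assms subspace_add by blast
  with tendsto_add[OF f(2) g(2)] show "x + y \<in> closure S" by (meson closure_sequential)
next
  fix c and x assume "x \<in> closure S"
  then obtain f where f: "\<And>n. f n \<in> S" "f \<longlonglongrightarrow> x" by (meson closure_sequential)
  have "c *\<^sub>R f n \<in> S" for n using f assms subspace_scale by blast
  with tendsto_scaleR[OF tendsto_const f(2)] show "c *\<^sub>R x \<in> closure S" by (meson closure_sequential)
qed

lemma subspace_cspan: "subspace (cspan Fs)"
  unfolding cspan_def by (simp add: subspace_closure)

lemma sum_in_cspan: "(\<And>n. n \<in> I \<Longrightarrow> xs n \<in> Fs n) \<Longrightarrow> (\<Sum>n\<in>I. xs n) \<in> cspan Fs"
  by (rule subspace_sum[OF subspace_cspan]) (use component_subset_cspan in blast)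

lemma sums_in_cspan:
  assumes "\<And>n. xs n \<in> Fs n" "xs sums x"
  shows "x \<in> cspan Fs"
proof -
  have "(\<Sum>n<m. xs n) \<in> span (\<Union>n. Fs n)" for m
    by (intro span_sum span_base) (use assms(1) in blast)
  moreover have "(\<lambda>m. \<Sum>n<m. xs n) \<longlonglongrightarrow> x" using assms(2) by (simp add: sums_def)
  ultimately show ?thesis unfolding cspan_def closure_sequential by (intro exI[of _ "\<lambda>m. \<Sum>n<m. xs n"]) simp
qed

lemma
  assumes "is_fdd Fs" "x \<in> cspan Fs"
  shows coord_mem: "coord Fs x n \<in> Fs n" and coord_sums: "coord Fs x sums x"
proof -
  have "(\<forall>n. coord Fs x n \<in> Fs n) \<and> coord Fs x sums x"
    unfolding coord_def using is_fddD(3)[OF assms] by (rule theI')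
  then show "coord Fs x n \<in> Fs n" "coord Fs x sums x" by auto
qed

lemma coord_unique:
  assumes "is_fdd Fs" "\<And>n. xs n \<in> Fs n" "xs sums x"
  shows "coord Fs x = xs"
  unfolding coord_def
  using is_fddD(3)[OF assms(1) sums_in_cspan[OF assms(2,3)]] assms(2,3) by (intro the1_equality) auto

lemma coord_add:
  assumes "is_fdd Fs" "x \<in> cspan Fs" "y \<in> cspan Fs"
  shows "coord Fs (x + y) = (\<lambda>n. coord Fs x n + coord Fs y n)"
  by (rule coord_unique[OF assms(1)])
     (auto intro!: subspace_add[OF subspace_fdd_component[OF assms(1)]] sums_add coord_mem coord_sums assms)

lemma coord_scale:
  assumes "is_fdd Fs" "x \<in> cspan Fs"
  shows "coord Fs (c *\<^sub>R x) = (\<lambda>n. c *\<^sub>R coord Fs x n)"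
  by (rule coord_unique[OF assms(1)])
     (auto intro!: subspace_scale[OF subspace_fdd_component[OF assms(1)]] sums_scaleR_right
       coord_mem coord_sums assms)

lemma coord_finite_sum:
  assumes "is_fdd Fs" "\<And>n. xs n \<in> Fs n" "\<And>n. n \<ge> M \<Longrightarrow> xs n = 0"
  shows "coord Fs (\<Sum>n<M. xs n) = xs"
  by (rule coord_unique[OF assms(1,2)], rule sums_finite) (use assms(3) in auto)

lemma absolute_fdd_is_fdd: "absolute_fdd C \<Longrightarrow> is_fdd C"
  by (simp add: absolute_fdd_def)

lemma unconditional_fdd_is_fdd: "unconditional_fdd B \<Longrightarrow> is_fdd B"
  by (simp add: unconditional_fdd_def)

lemma shrinking_fdd_is_fdd: "shrinking_fdd B \<Longrightarrow> is_fdd B"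
  by (simp add: shrinking_fdd_def)

definition fdd_proj :: "(nat \<Rightarrow> 'a::real_normed_vector set) \<Rightarrow> nat \<Rightarrow> 'a \<Rightarrow> 'a" where
  "fdd_proj Fs p x = (\<Sum>n<p. coord Fs x n)"

lemma fdd_proj_0 [simp]: "fdd_proj Fs 0 x = 0"
  by (simp add: fdd_proj_def)

lemma fdd_proj_add:
  "is_fdd Fs \<Longrightarrow> x \<in> cspan Fs \<Longrightarrow> y \<in> cspan Fs \<Longrightarrow> fdd_proj Fs p (x + y) = fdd_proj Fs p x + fdd_proj Fs p y"
  unfolding fdd_proj_def by (simp add: coord_add sum.distrib)

lemma fdd_proj_scale:
  "is_fdd Fs \<Longrightarrow> x \<in> cspan Fs \<Longrightarrow> fdd_proj Fs p (c *\<^sub>R x) = c *\<^sub>R fdd_proj Fs p x"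
  unfolding fdd_proj_def by (simp add: coord_scale scaleR_sum_right)

lemma fdd_proj_tendsto: "is_fdd Fs \<Longrightarrow> x \<in> cspan Fs \<Longrightarrow> (\<lambda>p. fdd_proj Fs p x) \<longlonglongrightarrow> x"
  using coord_sums unfolding fdd_proj_def sums_def by blast

lemma fdd_proj_diff:
  assumes "p \<le> q"
  shows "fdd_proj Fs q x - fdd_proj Fs p x = (\<Sum>n\<in>{p..<q}. coord Fs x n)"
  using sum.atLeastLessThan_concat[OF le0 assms, of "coord Fs x"]
  unfolding fdd_proj_def lessThan_atLeast0 by (metis add_diff_cancel_left')

lemma fdd_proj_in_span:
  assumes "is_fdd Fs" "x \<in> cspan Fs" "\<And>n. Fs n = span (S n)"
  shows "fdd_proj Fs p x \<in> span (\<Union>n<p. S n)"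
  unfolding fdd_proj_def
proof (rule span_sum)
  fix n assume "n \<in> {..<p}"
  then have "Fs n \<subseteq> span (\<Union>n<p. S n)" using assms(3) span_mono by (metis UN_upper)
  then show "coord Fs x n \<in> span (\<Union>n<p. S n)" using coord_mem[OF assms(1,2)] by blast
qed

lemma fdd_proj_eventually_close_on_finite_span:
  assumes fdd: "is_fdd C" and S: "finite S" "span S \<subseteq> cspan C" and e: "e > 0"
  shows "eventually (\<lambda>p. \<forall>x\<in>span S. norm (x - fdd_proj C p x) \<le> e * norm x) sequentially"
proof (rule eventually_uniformly_small_on_finite_span[OF S(1) _ _ _ e])
  fix p x y assume "x \<in> span S" "y \<in> span S"
  then have "x \<in> cspan C" "y \<in> cspan C" using S(2) by auto
  then show "x + y - fdd_proj C p (x + y) = x - fdd_proj C p x + (y - fdd_proj C p y)"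
    by (simp add: fdd_proj_add[OF fdd] algebra_simps)
next
  fix p c x assume "x \<in> span S"
  then show "c *\<^sub>R x - fdd_proj C p (c *\<^sub>R x) = c *\<^sub>R (x - fdd_proj C p x)"
    using fdd_proj_scale[OF fdd] S(2) by (auto simp: scaleR_diff_right)
next
  fix x assume "x \<in> span S"
  then have "(\<lambda>p. x - fdd_proj C p x) \<longlonglongrightarrow> x - x"
    using fdd_proj_tendsto[OF fdd] S(2) by (intro tendsto_diff tendsto_const) blast
  then show "(\<lambda>p. x - fdd_proj C p x) \<longlonglongrightarrow> 0" by simp
qed

section \<open>Absolute decompositions\<close>

definition absolute_constant :: "(nat \<Rightarrow> 'a::banach_lattice set) \<Rightarrow> real" where
  "absolute_constant C = (SOME A. A \<ge> 1 \<and> (\<forall>m xs. (\<forall>n. xs n \<in> C n) \<longrightarrow>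
      norm (\<Sum>n<m. labs (xs n)) \<le> A * norm (\<Sum>n<m. xs n)))"

lemma
  assumes "absolute_fdd C"
  shows absolute_constant_ge_1: "absolute_constant C \<ge> 1"
    and absolute_constant_bound: "\<And>m xs. (\<And>n. xs n \<in> C n) \<Longrightarrow>
      norm (\<Sum>n<m. labs (xs n)) \<le> absolute_constant C * norm (\<Sum>n<m. xs n)"
proof -
  have "\<exists>A. A \<ge> 1 \<and> (\<forall>m xs. (\<forall>n. xs n \<in> C n) \<longrightarrow>
      norm (\<Sum>n<m. labs (xs n)) \<le> A * norm (\<Sum>n<m. xs n))"
    using assms unfolding absolute_fdd_def by blast
  from someI_ex[OF this] show "absolute_constant C \<ge> 1"
    "\<And>m xs. (\<And>n. xs n \<in> C n) \<Longrightarrow> norm (\<Sum>n<m. labs (xs n)) \<le> absolute_constant C * norm (\<Sum>n<m. xs n)"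
    unfolding absolute_constant_def[symmetric] by blast+
qed

lemma norm_fdd_proj_le:
  assumes C: "absolute_fdd C" and x: "x \<in> cspan C"
  shows "norm (fdd_proj C p x) \<le> absolute_constant C * norm x"
proof -
  let ?A = "absolute_constant C" and ?c = "coord C x"
  have fdd: "is_fdd C" using C by (rule absolute_fdd_is_fdd)
  have lim: "(\<lambda>M. ?A * norm (\<Sum>n<M. ?c n)) \<longlonglongrightarrow> ?A * norm x"
    using coord_sums[OF fdd x] unfolding sums_def by (intro tendsto_intros)
  have "norm (fdd_proj C p x) \<le> ?A * norm (\<Sum>n<M. ?c n)" if M: "M \<ge> p" for M
  proof -
    have "labs (fdd_proj C p x) \<le> (\<Sum>n<p. labs (?c n))" unfolding fdd_proj_def by (rule labs_sum_le)
    also have "\<dots> \<le> (\<Sum>n<M. labs (?c n))"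
      by (rule sum_mono2) (use M in \<open>auto simp: labs_nonneg\<close>)
    finally have "norm (labs (fdd_proj C p x)) \<le> norm (\<Sum>n<M. labs (?c n))"
      by (intro norm_mono_nonneg labs_nonneg)
    also have "\<dots> \<le> ?A * norm (\<Sum>n<M. ?c n)" by (rule absolute_constant_bound[OF C coord_mem[OF fdd x]])
    finally show ?thesis by simp
  qed
  then show ?thesis by (intro LIMSEQ_le_const[OF lim]) blast
qed

lemma glue_on_disjoint_windows:
  assumes "disjoint_family_on E J" "\<And>j n. j \<in> J \<Longrightarrow> v j n \<in> F n" "\<And>n. 0 \<in> F n"
  obtains b where "\<And>n. b n \<in> F n" "\<And>j n. j \<in> J \<Longrightarrow> n \<in> E j \<Longrightarrow> b n = v j n"
    "\<And>n. n \<notin> (\<Union>j\<in>J. E j) \<Longrightarrow> b n = 0"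
proof
  define b where "b n = (if \<exists>j\<in>J. n \<in> E j then v (SOME j. j \<in> J \<and> n \<in> E j) n else 0)" for n
  show "b n \<in> F n" for n
  proof (cases "\<exists>j\<in>J. n \<in> E j")
    case True
    then obtain j where "j \<in> J \<and> n \<in> E j" by blast
    then have "(SOME j. j \<in> J \<and> n \<in> E j) \<in> J" by (rule someI2) simp
    then show ?thesis using True assms(2) by (simp add: b_def)
  qed (simp add: b_def assms(3))
  show "b n = v j n" if "j \<in> J" "n \<in> E j" for j n
  proof -
    have "(SOME j. j \<in> J \<and> n \<in> E j) = j"
      using that assms(1) by (intro some_equality) (auto simp: disjoint_family_on_def)
    then show ?thesis unfolding b_def using that by auto
  qed
  show "b n = 0" if "n \<notin> (\<Union>j\<in>J. E j)" for n using that unfolding b_def by auto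
qed

lemma sum_over_disjoint_windows:
  assumes "finite J" "\<And>j. j \<in> J \<Longrightarrow> finite (E j)" "disjoint_family_on E J"
    and "\<And>j n. j \<in> J \<Longrightarrow> n \<in> E j \<Longrightarrow> b n = v j n"
  shows "(\<Sum>n\<in>(\<Union>j\<in>J. E j). b n) = (\<Sum>j\<in>J. \<Sum>n\<in>E j. v j n)"
  using assms by (simp add: sum.UNION_disjoint disjoint_family_on_def)

lemma absolute_estimate_disjoint_windows:
  assumes C: "absolute_fdd C" and J: "finite J" "\<And>j. j \<in> J \<Longrightarrow> finite (E j)"
    and disj: "disjoint_family_on E J" and v: "\<And>j n. j \<in> J \<Longrightarrow> v j n \<in> C n"
  shows "norm (\<Sum>j\<in>J. \<Sum>n\<in>E j. labs (v j n)) \<le> absolute_constant C * norm (\<Sum>j\<in>J. \<Sum>n\<in>E j. v j n)"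
proof -
  obtain b where b: "\<And>n. b n \<in> C n" "\<And>j n. j \<in> J \<Longrightarrow> n \<in> E j \<Longrightarrow> b n = v j n"
    "\<And>n. n \<notin> (\<Union>j\<in>J. E j) \<Longrightarrow> b n = 0"
    using glue_on_disjoint_windows[of E J v C, OF disj v]
      subspace_0[OF subspace_fdd_component[OF absolute_fdd_is_fdd[OF C]]] by blast
  have "finite (\<Union>j\<in>J. E j)" using J by blast
  then obtain P where P: "(\<Union>j\<in>J. E j) \<subseteq> {..<P}" unfolding finite_nat_iff_bounded by blast
  have "(\<Sum>n<P. b n) = (\<Sum>n\<in>(\<Union>j\<in>J. E j). b n)"
    by (rule sum.mono_neutral_right) (use P b(3) in auto)
  also have "\<dots> = (\<Sum>j\<in>J. \<Sum>n\<in>E j. v j n)"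
    by (rule sum_over_disjoint_windows[OF J disj b(2)])
  finally have sum_b: "(\<Sum>n<P. b n) = (\<Sum>j\<in>J. \<Sum>n\<in>E j. v j n)" .
  have labs_b: "\<And>j n. j \<in> J \<Longrightarrow> n \<in> E j \<Longrightarrow> labs (b n) = labs (v j n)" using b(2) by simp
  have "(\<Sum>n<P. labs (b n)) = (\<Sum>n\<in>(\<Union>j\<in>J. E j). labs (b n))"
    by (rule sum.mono_neutral_right) (use P b(3) in auto)
  also have "\<dots> = (\<Sum>j\<in>J. \<Sum>n\<in>E j. labs (v j n))"
    by (rule sum_over_disjoint_windows[OF J disj labs_b])
  finally have "norm (\<Sum>j\<in>J. \<Sum>n\<in>E j. labs (v j n)) = norm (\<Sum>n<P. labs (b n))" by simp
  also have "\<dots> \<le> absolute_constant C * norm (\<Sum>n<P. b n)" by (rule absolute_constant_bound[OF C b(1)])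
  finally show ?thesis unfolding sum_b .
qed

lemma norm_sum_labs_separated_windows_le:
  assumes C: "absolute_fdd C" and P: "mono P" and J: "finite J"
    and sep: "\<And>i j. i \<in> J \<Longrightarrow> j \<in> J \<Longrightarrow> i < j \<Longrightarrow> Suc (Suc i) \<le> j"
    and xs: "\<And>j. j \<in> J \<Longrightarrow> xs j \<in> cspan C"
  shows "norm (\<Sum>j\<in>J. \<Sum>n\<in>{P j..<P (Suc (Suc j))}. labs (coord C (xs j) n))
    \<le> absolute_constant C * norm (\<Sum>j\<in>J. \<Sum>n\<in>{P j..<P (Suc (Suc j))}. coord C (xs j) n)"
proof (rule absolute_estimate_disjoint_windows[OF C J])
  have le: "P (Suc (Suc i)) \<le> P j" if "i \<in> J" "j \<in> J" "i < j" for i j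
    using sep[OF that] by (rule monoD[OF P])
  show "disjoint_family_on (\<lambda>j. {P j..<P (Suc (Suc j))}) J"
    unfolding disjoint_family_on_def
  proof (intro ballI impI)
    fix i j assume ij: "i \<in> J" "j \<in> J" "i \<noteq> j"
    show "{P i..<P (Suc (Suc i))} \<inter> {P j..<P (Suc (Suc j))} = {}"
    proof (cases "i < j")
      case True
      then have "P (Suc (Suc i)) \<le> P j" by (rule le[OF ij(1,2)])
      then show ?thesis by auto
    next
      case False
      then have "j < i" using ij(3) by simp
      then have "P (Suc (Suc j)) \<le> P i" by (rule le[OF ij(2,1)])
      then show ?thesis by auto
    qed
  qed
  show "coord C (xs j) n \<in> C n" if "j \<in> J" for j n
    using coord_mem[OF absolute_fdd_is_fdd[OF C] xs[OF that]] .
qed simp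

lemma absolute_estimate_of_window_approximation:
  fixes C :: "nat \<Rightarrow> 'a::banach_lattice set"
  assumes C: "absolute_fdd C" and P: "mono P"
    and xs: "\<And>j. j < m \<Longrightarrow> xs j \<in> cspan C"
    and subsums: "\<And>T. T \<subseteq> {..<m} \<Longrightarrow> norm (\<Sum>j\<in>T. xs j) \<le> R"
    and err: "(\<Sum>j<m. norm (xs j - (\<Sum>n\<in>{P j..<P (Suc (Suc j))}. coord C (xs j) n))) \<le> \<epsilon>"
  shows "norm (\<Sum>j<m. labs (xs j)) \<le> 2 * absolute_constant C * (R + \<epsilon>) + \<epsilon>"
proof -
  define A where "A = absolute_constant C"
  define u where "u j = (\<Sum>n\<in>{P j..<P (Suc (Suc j))}. coord C (xs j) n)" for j
  define V where "V J = (\<Sum>j\<in>J. \<Sum>n\<in>{P j..<P (Suc (Suc j))}. labs (coord C (xs j) n))" for J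
  have A: "A \<ge> 0" using absolute_constant_ge_1[OF C] by (simp add: A_def)
  have V: "norm (V J) \<le> A * (R + \<epsilon>)"
    if J: "J \<subseteq> {..<m}" and sep: "\<And>i j. i \<in> J \<Longrightarrow> j \<in> J \<Longrightarrow> i < j \<Longrightarrow> Suc (Suc i) \<le> j" for J
  proof -
    have fin: "finite J" using J finite_subset by blast
    have "norm (V J) \<le> A * norm (\<Sum>j\<in>J. u j)"
      unfolding V_def A_def u_def using J xs by (intro norm_sum_labs_separated_windows_le[OF C P fin sep]) auto
    also have "norm (\<Sum>j\<in>J. u j) \<le> norm (\<Sum>j\<in>J. xs j) + (\<Sum>j\<in>J. norm (xs j - u j))"
      using norm_triangle_ineq4[of "\<Sum>j\<in>J. xs j" "\<Sum>j\<in>J. xs j - u j"] norm_sum[of "\<lambda>j. xs j - u j" J]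
      by (simp add: sum_subtractf)
    also have "\<dots> \<le> R + \<epsilon>"
      using subsums[OF J] sum_mono2[OF finite_lessThan J, of "\<lambda>j. norm (xs j - u j)"] err
      unfolding u_def by simp
    finally show ?thesis using A by (simp add: mult_left_mono)
  qed
  \<comment> \<open>windows of indices of equal parity are disjoint\<close>
  define J0 where "J0 = {j \<in> {..<m}. even j}"
  define J1 where "J1 = {j \<in> {..<m}. odd j}"
  have V0: "norm (V J0) \<le> A * (R + \<epsilon>)" by (rule V) (auto simp: J0_def, presburger)
  have V1: "norm (V J1) \<le> A * (R + \<epsilon>)" by (rule V) (auto simp: J1_def, presburger)
  have "(\<Sum>j<m. labs (xs j)) \<le> (\<Sum>j<m. (\<Sum>n\<in>{P j..<P (Suc (Suc j))}. labs (coord C (xs j) n)) + labs (xs j - u j))"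
    unfolding u_def by (intro sum_mono labs_le_sum_labs_add_labs_diff)
  also have "\<dots> = V J0 + V J1 + (\<Sum>j<m. labs (xs j - u j))"
  proof -
    have split: "{..<m} = J0 \<union> J1" "J0 \<inter> J1 = {}" "finite J0" "finite J1"
      unfolding J0_def J1_def by auto
    have "V {..<m} = V J0 + V J1" unfolding V_def split(1) by (rule sum.union_disjoint) (use split in auto)
    then show ?thesis unfolding V_def by (simp add: sum.distrib)
  qed
  finally have "norm (\<Sum>j<m. labs (xs j)) \<le> norm (V J0 + V J1 + (\<Sum>j<m. labs (xs j - u j)))"
    by (rule norm_mono_nonneg[OF sum_labs_nonneg])
  also have "\<dots> \<le> norm (V J0) + norm (V J1) + (\<Sum>j<m. norm (xs j - u j))"
    using norm_triangle_ineq[of "V J0 + V J1" "\<Sum>j<m. labs (xs j - u j)"] norm_triangle_ineq[of "V J0" "V J1"]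
      norm_sum[of "\<lambda>j. labs (xs j - u j)" "{..<m}"] by simp
  also have "\<dots> \<le> A * (R + \<epsilon>) + A * (R + \<epsilon>) + \<epsilon>" using V0 V1 err unfolding u_def by linarith
  finally show ?thesis by (simp add: A_def)
qed

lemma window_error_sum_le:
  assumes P: "mono P" and R: "R \<ge> 0"
    and head: "\<And>j. j < m \<Longrightarrow> norm (fdd_proj C (P j) (xs j)) \<le> (1/2)^j * norm (xs j)"
    and tail: "\<And>j. j < m \<Longrightarrow> norm (xs j - fdd_proj C (P (Suc (Suc j))) (xs j)) \<le> (1/2)^j * norm (xs j)"
    and bound: "\<And>j. j < m \<Longrightarrow> norm (xs j) \<le> R"
  shows "(\<Sum>j<m. norm (xs j - (\<Sum>n\<in>{P j..<P (Suc (Suc j))}. coord C (xs j) n))) \<le> 4 * R"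
proof -
  have "norm (xs j - (\<Sum>n\<in>{P j..<P (Suc (Suc j))}. coord C (xs j) n)) \<le> 2 * R * (1/2)^j" if j: "j < m" for j
  proof -
    have "P j \<le> P (Suc (Suc j))" by (rule monoD[OF P]) simp
    then have "xs j - (\<Sum>n\<in>{P j..<P (Suc (Suc j))}. coord C (xs j) n)
        = (xs j - fdd_proj C (P (Suc (Suc j))) (xs j)) + fdd_proj C (P j) (xs j)"
      by (simp add: fdd_proj_diff[symmetric] algebra_simps)
    then have "norm (xs j - (\<Sum>n\<in>{P j..<P (Suc (Suc j))}. coord C (xs j) n))
        \<le> norm (xs j - fdd_proj C (P (Suc (Suc j))) (xs j)) + norm (fdd_proj C (P j) (xs j))"
      by (metis norm_triangle_ineq)
    also have "\<dots> \<le> 2 * ((1/2)^j * norm (xs j))" using head[OF j] tail[OF j] by simp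
    also have "\<dots> \<le> 2 * R * (1/2)^j" using bound[OF j] by (simp add: mult_left_mono)
    finally show ?thesis .
  qed
  then have "(\<Sum>j<m. norm (xs j - (\<Sum>n\<in>{P j..<P (Suc (Suc j))}. coord C (xs j) n))) \<le> (\<Sum>j<m. 2 * R * (1/2)^j)"
    by (intro sum_mono) simp
  also have "\<dots> = 2 * R * (\<Sum>j<m. (1/2::real)^j)" by (simp add: sum_distrib_left)
  also have "\<dots> \<le> 2 * R * 2" using R by (intro mult_left_mono) (simp_all add: sum_gp_strict)
  finally show ?thesis by simp
qed

section \<open>Shrinking decompositions\<close>

lemma abs_linear_le_Sup_unit_ball:
  fixes f :: "'a::real_normed_vector \<Rightarrow> real"
  assumes f: "linear f" and V: "subspace V" and K: "\<And>x. x \<in> V \<Longrightarrow> \<bar>f x\<bar> \<le> K * norm x"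
    and x: "x \<in> V"
  shows "\<bar>f x\<bar> \<le> Sup {\<bar>f y\<bar> | y. y \<in> V \<and> norm y \<le> 1} * norm x"
proof (cases "x = 0")
  case False
  have "bdd_above {\<bar>f y\<bar> | y. y \<in> V \<and> norm y \<le> 1}"
  proof (rule bdd_aboveI)
    fix r assume "r \<in> {\<bar>f y\<bar> | y. y \<in> V \<and> norm y \<le> 1}"
    then obtain y where "r = \<bar>f y\<bar>" "y \<in> V" "norm y \<le> 1" by blast
    then have "r \<le> K * norm y" using K by blast
    also have "\<dots> \<le> max K 0 * 1" using \<open>norm y \<le> 1\<close> by (intro mult_mono) auto
    finally show "r \<le> max K 0" by simp
  qed
  moreover have "(1 / norm x) *\<^sub>R x \<in> V" "norm ((1 / norm x) *\<^sub>R x) \<le> 1"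
    using x V False by (auto intro: subspace_scale)
  ultimately have "\<bar>f ((1 / norm x) *\<^sub>R x)\<bar> \<le> Sup {\<bar>f y\<bar> | y. y \<in> V \<and> norm y \<le> 1}"
    by (intro cSup_upper) blast+
  then show ?thesis using False by (simp add: linear_scale[OF f] abs_mult field_simps)
qed (simp add: linear_0[OF f])

lemma shrinking_eventually_small_on_tails:
  fixes f :: "'a::real_normed_vector \<Rightarrow> real"
  assumes sh: "shrinking_fdd B" and f: "linear f" and K: "\<And>x. x \<in> cspan B \<Longrightarrow> \<bar>f x\<bar> \<le> K * norm x"
    and e: "e > 0"
  shows "eventually (\<lambda>m. \<forall>x\<in>span (\<Union>n\<in>{m..}. B n). \<bar>f x\<bar> \<le> e * norm x) sequentially"
proof -
  define \<sigma> where "\<sigma> m = Sup {\<bar>f x\<bar> | x. x \<in> span (\<Union>n\<in>{m..}. B n) \<and> norm x \<le> 1}" for m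
  have "\<sigma> \<longlonglongrightarrow> 0" using sh f K unfolding shrinking_fdd_def \<sigma>_def by blast
  then have "eventually (\<lambda>m. \<sigma> m < e) sequentially" using e by (simp add: order_tendsto_iff)
  then show ?thesis
  proof (rule eventually_mono, intro ballI)
    fix m x assume "\<sigma> m < e" and x: "x \<in> span (\<Union>n\<in>{m..}. B n)"
    have "\<bar>f x\<bar> \<le> \<sigma> m * norm x"
      unfolding \<sigma>_def using span_subset_cspan K x
      by (intro abs_linear_le_Sup_unit_ball[OF f subspace_span]) blast+
    also have "\<dots> \<le> e * norm x" using \<open>\<sigma> m < e\<close> by (simp add: mult_right_mono)
    finally show "\<bar>f x\<bar> \<le> e * norm x" .
  qed
qed

lemma representation_functionals:
  fixes \<phi> :: "'a::real_vector \<Rightarrow> 'b::real_vector"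
  assumes Z: "subspace Z" and T: "independent T"
    and add: "\<And>x y. x \<in> Z \<Longrightarrow> y \<in> Z \<Longrightarrow> \<phi> (x + y) = \<phi> x + \<phi> y"
    and scale: "\<And>c x. x \<in> Z \<Longrightarrow> \<phi> (c *\<^sub>R x) = c *\<^sub>R \<phi> x"
    and rng: "\<And>x. x \<in> Z \<Longrightarrow> \<phi> x \<in> span T"
  obtains f where "\<And>t. linear (f t)" "\<And>t x. x \<in> Z \<Longrightarrow> f t x = representation T (\<phi> x) t"
proof -
  have "\<exists>f. linear f \<and> (\<forall>x\<in>Z. f x = representation T (\<phi> x) t)" for t
  proof (rule linear_extension_from_subspace[OF Z, where g="\<lambda>x. representation T (\<phi> x) t"])
    show "representation T (\<phi> (x + y)) t = representation T (\<phi> x) t + representation T (\<phi> y) t"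
      if "x \<in> Z" "y \<in> Z" for x y
      using that add representation_add[OF T rng rng] by simp
    show "representation T (\<phi> (c *\<^sub>R x)) t = c *\<^sub>R representation T (\<phi> x) t" if "x \<in> Z" for c x
      using that scale representation_scale[OF T rng] by simp
  qed blast
  then show ?thesis using that by metis
qed

lemma shrinking_finite_rank_eventually_small_on_tails:
  fixes \<phi> :: "'a::real_normed_vector \<Rightarrow> 'a"
  assumes sh: "shrinking_fdd B" and Z: "subspace Z" and BZ: "cspan B \<subseteq> Z"
    and add: "\<And>x y. x \<in> Z \<Longrightarrow> y \<in> Z \<Longrightarrow> \<phi> (x + y) = \<phi> x + \<phi> y"
    and scale: "\<And>c x. x \<in> Z \<Longrightarrow> \<phi> (c *\<^sub>R x) = c *\<^sub>R \<phi> x"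
    and S: "finite S" and rng: "\<And>x. x \<in> Z \<Longrightarrow> \<phi> x \<in> span S"
    and bnd: "\<And>x. x \<in> Z \<Longrightarrow> norm (\<phi> x) \<le> A * norm x"
    and e: "e > 0"
  shows "eventually (\<lambda>m. \<forall>x\<in>span (\<Union>n\<in>{m..}. B n). norm (\<phi> x) \<le> e * norm x) sequentially"
proof -
  obtain T where T: "finite T" "independent T" "span T = span S"
    using finite_basis_subset[OF S] by blast
  obtain M where M: "M \<ge> 0" "\<And>w t. w \<in> span T \<Longrightarrow> t \<in> T \<Longrightarrow> \<bar>representation T w t\<bar> \<le> M * norm w"
    using representation_bounded[OF T(1,2)] by blast
  have rngT: "\<phi> x \<in> span T" if "x \<in> Z" for x using rng[OF that] T(3) by simp
  obtain f where f: "\<And>t. linear (f t)" "\<And>t x. x \<in> Z \<Longrightarrow> f t x = representation T (\<phi> x) t"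
    using representation_functionals[OF Z T(2) add scale rngT] by blast
  define \<epsilon> where "\<epsilon> = e / ((\<Sum>t\<in>T. norm t) + 1)"
  have "0 \<le> (\<Sum>t\<in>T. norm t)" by (simp add: sum_nonneg)
  then have \<epsilon>: "\<epsilon> > 0" "\<epsilon> * (\<Sum>t\<in>T. norm t) \<le> e"
    using e by (auto simp: \<epsilon>_def field_simps)
  have "\<bar>f t x\<bar> \<le> (M * A) * norm x" if t: "t \<in> T" and x: "x \<in> cspan B" for t x
  proof -
    have xZ: "x \<in> Z" using x BZ by blast
    have "\<bar>f t x\<bar> \<le> M * norm (\<phi> x)" using f(2)[OF xZ] M(2)[OF rngT[OF xZ] t] by simp
    also have "\<dots> \<le> M * (A * norm x)" using bnd[OF xZ] M(1) by (rule mult_left_mono)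
    finally show ?thesis by (simp add: mult_ac)
  qed
  then have "\<forall>t\<in>T. eventually (\<lambda>m. \<forall>x\<in>span (\<Union>n\<in>{m..}. B n). \<bar>f t x\<bar> \<le> \<epsilon> * norm x) sequentially"
    using shrinking_eventually_small_on_tails[OF sh f(1) _ \<epsilon>(1)] by blast
  then have "eventually (\<lambda>m. \<forall>t\<in>T. \<forall>x\<in>span (\<Union>n\<in>{m..}. B n). \<bar>f t x\<bar> \<le> \<epsilon> * norm x) sequentially"
    by (rule eventually_ball_finite[OF T(1)])
  then show ?thesis
  proof (rule eventually_mono, intro ballI)
    fix m x assume small: "\<forall>t\<in>T. \<forall>x\<in>span (\<Union>n\<in>{m..}. B n). \<bar>f t x\<bar> \<le> \<epsilon> * norm x"
      and x: "x \<in> span (\<Union>n\<in>{m..}. B n)"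
    have xZ: "x \<in> Z" using x span_subset_cspan BZ by blast
    have "\<phi> x = (\<Sum>t\<in>T. f t x *\<^sub>R t)"
      using sum_representation_eq[OF T(2) rngT[OF xZ] T(1)] f(2)[OF xZ] by simp
    then have "norm (\<phi> x) \<le> (\<Sum>t\<in>T. norm (f t x *\<^sub>R t))" using norm_sum by metis
    also have "\<dots> = (\<Sum>t\<in>T. \<bar>f t x\<bar> * norm t)" by simp
    also have "\<dots> \<le> (\<Sum>t\<in>T. \<epsilon> * norm x * norm t)"
      using small x by (intro sum_mono mult_right_mono) auto
    also have "\<dots> = norm x * (\<epsilon> * (\<Sum>t\<in>T. norm t))" by (simp add: sum_distrib_left mult_ac)
    also have "\<dots> \<le> norm x * e" using \<epsilon>(2) by (simp add: mult_left_mono)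
    finally show "norm (\<phi> x) \<le> e * norm x" by (simp add: mult.commute)
  qed
qed

lemma fdd_proj_eventually_small_on_tails:
  assumes C: "absolute_fdd C" and sh: "shrinking_fdd B" and BC: "cspan B \<subseteq> cspan C" and e: "e > 0"
  shows "eventually (\<lambda>n. \<forall>x\<in>span (\<Union>i\<in>{n..}. B i). norm (fdd_proj C p x) \<le> e * norm x) sequentially"
proof -
  have fdd: "is_fdd C" using C by (rule absolute_fdd_is_fdd)
  obtain S where S: "\<And>n. finite (S n)" "\<And>n. C n = span (S n)"
    using fdd_component_generators[OF fdd] by blast
  show ?thesis
  proof (rule shrinking_finite_rank_eventually_small_on_tails[OF sh subspace_cspan BC])
    show "finite (\<Union>n<p. S n)" using S(1) by blast
  qed (use fdd_proj_add[OF fdd] fdd_proj_scale[OF fdd] fdd_proj_in_span[OF fdd _ S(2)]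
         norm_fdd_proj_le[OF C] e in auto)
qed

section \<open>Rearrangements of series\<close>

definition block_index :: "(nat \<Rightarrow> nat) \<Rightarrow> nat \<Rightarrow> nat" where
  "block_index k n = (LEAST j. n < k (Suc j))"

lemma block_index:
  assumes k: "strict_mono k" "k 0 = 0"
  shows "k (block_index k n) \<le> n" "n < k (Suc (block_index k n))"
proof -
  have "n < k (Suc n)" using seq_suble[OF k(1), of "Suc n"] by simp
  then show upper: "n < k (Suc (block_index k n))" unfolding block_index_def by (rule LeastI)
  show "k (block_index k n) \<le> n"
  proof (cases "block_index k n")
    case (Suc j)
    then have "\<not> n < k (Suc j)" unfolding block_index_def by (metis lessI not_less_Least)
    then show ?thesis using Suc by simp
  qed (simp add: k(2))
qed

lemma block_index_eqI:
  assumes k: "strict_mono k" "k 0 = 0" and n: "k j \<le> n" "n < k (Suc j)"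
  shows "block_index k n = j"
proof -
  have "block_index k n \<le> j" unfolding block_index_def by (rule Least_le) (rule n(2))
  moreover have "\<not> block_index k n < j"
  proof
    assume "block_index k n < j"
    then have "k (Suc (block_index k n)) \<le> k j" using strict_mono_less_eq[OF k(1)] by simp
    then show False using block_index(2)[OF k, of n] n(1) by simp
  qed
  ultimately show ?thesis by simp
qed

lemma exists_perm_onto_initial_segment:
  fixes G :: "nat set"
  assumes G: "G \<subseteq> {a..<b}"
  obtains q where "bij_betw q {a..<b} {a..<b}" "q ` {a..<a + card G} = G"
proof -
  have fG: "finite G" using G finite_subset by blast
  have cG: "card G \<le> b - a" using card_mono[OF _ G] by simp
  obtain f1 where f1: "bij_betw f1 {a..<a + card G} G"
    using finite_same_card_bij[of "{a..<a + card G}" G] fG by auto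
  have "card ({a..<b} - G) = b - a - card G" using card_Diff_subset[OF fG G] by simp
  then obtain f2 where f2: "bij_betw f2 {a + card G..<b} ({a..<b} - G)"
    using finite_same_card_bij[of "{a + card G..<b}" "{a..<b} - G"] by auto
  define q where "q n = (if n < a + card G then f1 n else f2 n)" for n
  have b1: "bij_betw q {a..<a + card G} G"
    using f1 by (rule bij_betw_cong[THEN iffD1, rotated]) (auto simp: q_def)
  have b2: "bij_betw q {a + card G..<b} ({a..<b} - G)"
    using f2 by (rule bij_betw_cong[THEN iffD1, rotated]) (auto simp: q_def)
  have "bij_betw q ({a..<a + card G} \<union> {a + card G..<b}) (G \<union> ({a..<b} - G))"
    by (rule bij_betw_combine[OF b1 b2]) auto
  moreover have "{a..<a + card G} \<union> {a + card G..<b} = {a..<b}" using cG by auto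
  moreover have "G \<union> ({a..<b} - G) = {a..<b}" using G by auto
  ultimately show ?thesis using that b1 bij_betw_imp_surj_on by metis
qed

lemma bij_of_bij_on_blocks:
  fixes k p :: "nat \<Rightarrow> nat"
  assumes k: "strict_mono k" "k 0 = 0" and p: "\<And>j. bij_betw p {k j..<k (Suc j)} {k j..<k (Suc j)}"
  shows "bij p"
proof -
  have initial: "bij_betw p {..<k j} {..<k j}" for j
  proof (induction j)
    case (Suc j)
    have split: "{..<k (Suc j)} = {..<k j} \<union> {k j..<k (Suc j)}"
      using strict_mono_less_eq[OF k(1), of j "Suc j"] by auto
    show ?case unfolding split by (rule bij_betw_combine[OF Suc.IH p]) auto
  qed (simp add: k(2) bij_betw_def)
  have "bij_betw p (\<Union>j. {..<k j}) (\<Union>j. {..<k j})"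
    by (rule bij_betw_UNION_chain[OF _ initial]) (meson lessThan_subset_iff nle_le strict_mono_less_eq k(1))
  moreover have "(\<Union>j. {..<k j}) = UNIV"
  proof (rule sym, rule UNIV_eq_I)
    fix n
    have "n < k (Suc n)" using seq_suble[OF k(1), of "Suc n"] by simp
    then show "n \<in> (\<Union>j. {..<k j})" by blast
  qed
  ultimately show ?thesis by simp
qed

lemma sums_interval_sums_tendsto_zero:
  fixes c :: "nat \<Rightarrow> 'a::real_normed_vector"
  assumes "c sums x" "filterlim a at_top sequentially" "\<And>i. a i \<le> a' i"
  shows "(\<lambda>i. \<Sum>j\<in>{a i..<a' i}. c j) \<longlonglongrightarrow> 0"
proof -
  have lim: "(\<lambda>m. \<Sum>j<m. c j) \<longlonglongrightarrow> x" using assms(1) by (simp add: sums_def)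
  have "filterlim a' at_top sequentially" by (rule filterlim_at_top_mono[OF assms(2)]) (use assms(3) in auto)
  then have "(\<lambda>i. (\<Sum>j<a' i. c j) - (\<Sum>j<a i. c j)) \<longlonglongrightarrow> x - x"
    by (intro tendsto_diff filterlim_compose[OF lim] assms(2))
  moreover have "(\<Sum>j<a' i. c j) - (\<Sum>j<a i. c j) = (\<Sum>j\<in>{a i..<a' i}. c j)" for i
    unfolding lessThan_atLeast0 sum.atLeastLessThan_concat[OF le0 assms(3)[of i], of c, symmetric] by simp
  ultimately show ?thesis by (simp only: diff_self)
qed

lemma block_sums_tendsto_zero_of_rearrangements:
  fixes b :: "nat \<Rightarrow> 'a::real_normed_vector"
  assumes re: "\<And>p. bij p \<Longrightarrow> (\<lambda>n. b (p n)) sums x"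
    and k: "strict_mono k" "k 0 = 0" and G: "\<And>j. G j \<subseteq> {k j..<k (Suc j)}"
  shows "(\<lambda>j. \<Sum>n\<in>G j. b n) \<longlonglongrightarrow> 0"
proof -
  have "\<exists>q. bij_betw q {k j..<k (Suc j)} {k j..<k (Suc j)} \<and> q ` {k j..<k j + card (G j)} = G j" for j
    using exists_perm_onto_initial_segment[OF G] by blast
  then obtain q where q: "\<And>j. bij_betw (q j) {k j..<k (Suc j)} {k j..<k (Suc j)}"
    "\<And>j. q j ` {k j..<k j + card (G j)} = G j"
    by metis
  \<comment> \<open>\<open>p\<close> moves \<open>G j\<close> to the front of the \<open>j\<close>-th block, so the sum over \<open>G j\<close> is a
    difference of partial sums of the rearranged series\<close>
  define p where "p n = q (block_index k n) n" for n
  have p_eq: "p n = q j n" if "n \<in> {k j..<k (Suc j)}" for j n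
    using block_index_eqI[OF k, of j n] that unfolding p_def by simp
  have "bij_betw p {k j..<k (Suc j)} {k j..<k (Suc j)}" for j
    using q(1) by (rule bij_betw_cong[THEN iffD1, rotated]) (simp add: p_eq)
  then have p: "bij p" by (rule bij_of_bij_on_blocks[OF k])
  have le: "k j + card (G j) \<le> k (Suc j)" for j
    using card_mono[OF _ G[of j]] strict_mono_less_eq[OF k(1), of j "Suc j"] by simp
  have "(\<Sum>i\<in>{k j..<k j + card (G j)}. b (p i)) = (\<Sum>n\<in>G j. b n)" for j
  proof -
    have "p ` {k j..<k j + card (G j)} = q j ` {k j..<k j + card (G j)}"
      by (rule image_cong[OF refl]) (use le[of j] p_eq in auto)
    then have "p ` {k j..<k j + card (G j)} = G j" using q(2) by simp
    moreover have "inj_on p {k j..<k j + card (G j)}" using bij_is_inj[OF p] inj_on_subset by blast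
    ultimately show ?thesis using sum.reindex[of p "{k j..<k j + card (G j)}" b] by simp
  qed
  moreover have "(\<lambda>j. \<Sum>i\<in>{k j..<k j + card (G j)}. b (p i)) \<longlonglongrightarrow> 0"
    by (rule sums_interval_sums_tendsto_zero[OF re[OF p] filterlim_subseq[OF k(1)]]) simp
  ultimately show ?thesis by simp
qed

lemma finite_sums_small_of_rearrangements:
  fixes b :: "nat \<Rightarrow> 'a::real_normed_vector"
  assumes re: "\<And>p. bij p \<Longrightarrow> (\<lambda>n. b (p n)) sums x" and e: "e > 0"
  shows "\<exists>N. \<forall>S. finite S \<and> S \<subseteq> {N..} \<longrightarrow> norm (\<Sum>n\<in>S. b n) \<le> e"
proof (rule ccontr)
  assume "\<not> ?thesis"
  then obtain G where G: "\<And>N. finite (G N)" "\<And>N. G N \<subseteq> {N..}" "\<And>N. norm (\<Sum>n\<in>G N. b n) > e"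
    by (metis not_le)
  define k where "k = rec_nat 0 (\<lambda>_ m. Suc (Max (insert m (G m))))"
  have k_Suc: "k (Suc j) = Suc (Max (insert (k j) (G (k j))))" for j unfolding k_def by simp
  have k: "strict_mono k" "k 0 = 0"
    unfolding strict_mono_Suc_iff k_Suc using G(1) by (simp_all add: le_imp_less_Suc k_def)
  have blocks: "G (k j) \<subseteq> {k j..<k (Suc j)}" for j
    unfolding k_Suc using G(1) G(2)[of "k j"] by (auto simp: le_imp_less_Suc subset_eq)
  have "(\<lambda>j. \<Sum>n\<in>G (k j). b n) \<longlonglongrightarrow> 0"
    by (rule block_sums_tendsto_zero_of_rearrangements[OF _ k blocks]) (rule re)
  then have "eventually (\<lambda>j. norm (\<Sum>n\<in>G (k j). b n) < e) sequentially"
    using e by (rule order_tendstoD(2)[OF tendsto_norm_zero])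
  then obtain j where "norm (\<Sum>n\<in>G (k j). b n) < e" by (meson eventually_sequentially order_refl)
  then show False using G(3)[of "k j"] by simp
qed

section \<open>Zabreiko's lemma\<close>

lemma Baire_closure_ball:
  fixes Y :: "'a::banach set" and F :: "nat \<Rightarrow> 'a set"
  assumes Y: "closed Y" "Y \<noteq> {}" and cover: "Y \<subseteq> (\<Union>k. F k)"
  shows "\<exists>k x0 r. r > 0 \<and> x0 \<in> Y \<and> (\<forall>z\<in>Y. dist x0 z < r \<longrightarrow> z \<in> closure (F k))"
proof -
  let ?X = "top_of_set Y"
  have cm: "completely_metrizable_space ?X"
    by (rule completely_metrizable_space_closedin[OF completely_metrizable_space_euclidean]) (use Y in simp)
  have "(\<Union>k. Y \<inter> closure (F k)) = Y" using cover closure_subset by blast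
  then have nonempty: "?X interior_of (\<Union>k. Y \<inter> closure (F k)) \<noteq> {}"
    using Y(2) interior_of_topspace[of ?X] by simp
  have "\<exists>k. ?X interior_of (Y \<inter> closure (F k)) \<noteq> {}"
  proof (rule ccontr)
    assume "\<nexists>k. ?X interior_of (Y \<inter> closure (F k)) \<noteq> {}"
    then have "?X interior_of (\<Union>k. Y \<inter> closure (F k)) = {}"
      by (intro Baire_category_alt) (use cm in \<open>auto intro: countable_image simp: closedin_closed_Int\<close>)
    with nonempty show False by contradiction
  qed
  then obtain k where "?X interior_of (Y \<inter> closure (F k)) \<noteq> {}" by blast
  then obtain x0 where x0: "x0 \<in> ?X interior_of (Y \<inter> closure (F k))" by blast
  have "openin ?X (?X interior_of (Y \<inter> closure (F k)))" by (rule openin_interior_of)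
  from this[unfolded openin_contains_ball, THEN conjunct2, rule_format, OF x0]
  obtain r where r: "r > 0" "ball x0 r \<inter> Y \<subseteq> ?X interior_of (Y \<inter> closure (F k))" by blast
  have sub: "?X interior_of (Y \<inter> closure (F k)) \<subseteq> Y \<inter> closure (F k)" by (rule interior_of_subset)
  then have "x0 \<in> Y" using x0 by blast
  moreover have "z \<in> closure (F k)" if "z \<in> Y" "dist x0 z < r" for z
  proof -
    have "z \<in> ball x0 r \<inter> Y" using that by simp
    then show ?thesis using r(2) sub by blast
  qed
  ultimately show ?thesis using r(1) by blast
qed

lemma zabreiko_approximation:
  fixes Y :: "'a::real_normed_vector set" and \<rho> :: "'a \<Rightarrow> real"
  assumes Y: "subspace Y"
    and add: "\<And>x y. x \<in> Y \<Longrightarrow> y \<in> Y \<Longrightarrow> \<rho> (x + y) \<le> \<rho> x + \<rho> y"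
    and neg: "\<And>x. x \<in> Y \<Longrightarrow> \<rho> (- x) \<le> \<rho> x"
    and x0: "x0 \<in> Y" and r: "r > 0"
    and dense: "\<And>z. z \<in> Y \<Longrightarrow> dist x0 z < r \<Longrightarrow> z \<in> closure {x \<in> Y. \<rho> x \<le> k}"
    and y: "y \<in> Y" "norm y < r"
  shows "\<exists>w\<in>Y. \<rho> w \<le> 2 * k \<and> norm (y - w) \<le> r / 4"
proof -
  let ?F = "{x \<in> Y. \<rho> x \<le> k}"
  have "x0 + y \<in> closure ?F" by (rule dense) (use Y x0 y in \<open>auto simp: dist_norm subspace_add\<close>)
  then obtain w1 where w1: "w1 \<in> ?F" "dist w1 (x0 + y) < r / 8"
    using r unfolding closure_approachable by (meson divide_pos_pos zero_less_numeral)
  have "x0 \<in> closure ?F" by (rule dense) (use r x0 in auto)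
  then obtain w2 where w2: "w2 \<in> ?F" "dist w2 x0 < r / 8"
    using r unfolding closure_approachable by (meson divide_pos_pos zero_less_numeral)
  have "w1 - w2 \<in> Y" using w1(1) w2(1) subspace_diff[OF Y] by blast
  moreover have "\<rho> (w1 - w2) \<le> 2 * k"
  proof -
    have "\<rho> (w1 - w2) \<le> \<rho> w1 + \<rho> (- w2)" using add[of w1 "- w2"] w1(1) w2(1) subspace_neg[OF Y] by simp
    also have "\<rho> (- w2) \<le> \<rho> w2" using neg w2(1) by simp
    finally show ?thesis using w1(1) w2(1) by simp
  qed
  moreover have "norm (y - (w1 - w2)) \<le> r / 4"
  proof -
    have "y - (w1 - w2) = (x0 + y - w1) - (x0 - w2)" by (simp add: algebra_simps)
    then have "norm (y - (w1 - w2)) \<le> norm (x0 + y - w1) + norm (x0 - w2)"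
      using norm_triangle_ineq4 by metis
    also have "\<dots> \<le> r / 8 + r / 8" using w1(2) w2(2) by (simp add: dist_norm norm_minus_commute)
    finally show ?thesis by simp
  qed
  ultimately show ?thesis by blast
qed

lemma approximation_by_rescaling:
  fixes Y :: "'a::real_normed_vector set" and \<rho> :: "'a \<Rightarrow> real"
  assumes Y: "subspace Y" and scale: "\<And>c x. x \<in> Y \<Longrightarrow> \<rho> (c *\<^sub>R x) \<le> \<bar>c\<bar> * \<rho> x" and r: "r > 0"
    and approx: "\<And>y. y \<in> Y \<Longrightarrow> norm y < r \<Longrightarrow> \<exists>w\<in>Y. \<rho> w \<le> a \<and> norm (y - w) \<le> r / 4"
    and z: "z \<in> Y"
  shows "\<exists>w\<in>Y. \<rho> w \<le> 2 * a / r * norm z \<and> norm (z - w) \<le> norm z / 2"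
proof (cases "z = 0")
  case True
  then show ?thesis using scale[of 0 0] subspace_0[OF Y] by (intro bexI[of _ 0]) auto
next
  case False
  define l where "l = r / (2 * norm z)"
  have l: "l > 0" using r False by (simp add: l_def)
  have "l *\<^sub>R z \<in> Y" "norm (l *\<^sub>R z) < r" using z subspace_scale[OF Y] r False by (auto simp: l_def)
  then obtain w' where w': "w' \<in> Y" "\<rho> w' \<le> a" "norm (l *\<^sub>R z - w') \<le> r / 4"
    using approx by blast
  define w where "w = (1 / l) *\<^sub>R w'"
  have "w \<in> Y" unfolding w_def using w'(1) subspace_scale[OF Y] by blast
  moreover have "\<rho> w \<le> 2 * a / r * norm z"
  proof -
    have "\<rho> w \<le> (1 / l) * \<rho> w'" unfolding w_def using scale[OF w'(1), of "1 / l"] l by simp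
    also have "\<dots> \<le> (1 / l) * a" using w'(2) l by (intro mult_left_mono) auto
    also have "\<dots> = 2 * a / r * norm z" unfolding l_def using False r by (simp add: field_simps)
    finally show ?thesis .
  qed
  moreover have "norm (z - w) \<le> norm z / 2"
  proof -
    have "z - w = (1 / l) *\<^sub>R (l *\<^sub>R z - w')" unfolding w_def using l by (simp add: algebra_simps)
    then have "norm (z - w) = (1 / l) * norm (l *\<^sub>R z - w')" using l by simp
    also have "\<dots> \<le> (1 / l) * (r / 4)" using w'(3) l by (intro mult_left_mono) auto
    also have "\<dots> = norm z / 2" unfolding l_def using False r by (simp add: field_simps)
    finally show ?thesis .
  qed
  ultimately show ?thesis by blast
qed

lemma zabreiko_step:
  fixes Y :: "'a::banach set" and \<rho> :: "'a \<Rightarrow> real"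
  assumes Y: "closed Y" "subspace Y"
    and add: "\<And>x y. x \<in> Y \<Longrightarrow> y \<in> Y \<Longrightarrow> \<rho> (x + y) \<le> \<rho> x + \<rho> y"
    and scale: "\<And>c x. x \<in> Y \<Longrightarrow> \<rho> (c *\<^sub>R x) \<le> \<bar>c\<bar> * \<rho> x"
  shows "\<exists>c\<ge>0. \<forall>z\<in>Y. \<exists>w\<in>Y. \<rho> w \<le> c * norm z \<and> norm (z - w) \<le> norm z / 2"
proof -
  have cover: "Y \<subseteq> (\<Union>k. {x \<in> Y. \<rho> x \<le> real k})"
  proof
    fix x assume "x \<in> Y"
    moreover have "\<rho> x \<le> real (nat \<lceil>\<rho> x\<rceil>)" by linarith
    ultimately show "x \<in> (\<Union>k. {x \<in> Y. \<rho> x \<le> real k})" by blast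
  qed
  have "Y \<noteq> {}" using subspace_0[OF Y(2)] by blast
  from Baire_closure_ball[OF Y(1) this cover]
  obtain k x0 r where r: "r > 0" "x0 \<in> Y"
    and "\<forall>z\<in>Y. dist x0 z < r \<longrightarrow> z \<in> closure {x \<in> Y. \<rho> x \<le> real k}"
    by blast
  then have dense: "\<And>z. z \<in> Y \<Longrightarrow> dist x0 z < r \<Longrightarrow> z \<in> closure {x \<in> Y. \<rho> x \<le> real k}"
    by blast
  have neg: "\<rho> (- x) \<le> \<rho> x" if "x \<in> Y" for x using scale[OF that, of "-1"] by simp
  have "\<exists>w\<in>Y. \<rho> w \<le> 2 * (2 * real k) / r * norm z \<and> norm (z - w) \<le> norm z / 2" if "z \<in> Y" for z
    using approximation_by_rescaling[OF Y(2) scale r(1) zabreiko_approximation[OF Y(2) add neg r(2,1) dense] that] .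
  moreover have "2 * (2 * real k) / r \<ge> 0" using r by simp
  ultimately show ?thesis by blast
qed

lemma halving_iteration_sums:
  fixes f :: "'a::real_normed_vector \<Rightarrow> 'a"
  assumes Y: "subspace Y" and f: "\<And>z. z \<in> Y \<Longrightarrow> f z \<in> Y \<and> norm (z - f z) \<le> norm z / 2"
    and y: "y \<in> Y"
  defines "zs \<equiv> \<lambda>i. ((\<lambda>z. z - f z) ^^ i) y"
  shows "zs i \<in> Y" "norm (zs i) \<le> norm y / 2 ^ i" "(\<lambda>i. f (zs i)) sums y"
proof -
  have zs_Suc: "zs (Suc i) = zs i - f (zs i)" for i unfolding zs_def by simp
  have zs: "zs i \<in> Y \<and> norm (zs i) \<le> norm y / 2 ^ i" for i
  proof (induction i)
    case (Suc i)
    have "norm (zs (Suc i)) \<le> norm (zs i) / 2" using f Suc unfolding zs_Suc by blast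
    also have "\<dots> \<le> norm y / 2 ^ Suc i" using Suc by (simp add: divide_right_mono)
    finally show ?case using f Suc subspace_diff[OF Y] unfolding zs_Suc by blast
  qed (simp add: zs_def y)
  then show "zs i \<in> Y" "norm (zs i) \<le> norm y / 2 ^ i" by blast+
  have partial: "(\<Sum>i<m. f (zs i)) = y - zs m" for m
    by (induction m) (simp_all add: zs_def zs_Suc[unfolded zs_def])
  have "zs \<longlonglongrightarrow> 0"
  proof (rule Lim_null_comparison[OF always_eventually])
    show "\<forall>m. norm (zs m) \<le> norm y * (1/2) ^ m" using zs by (simp add: power_divide)
    show "(\<lambda>m. norm y * (1/2::real) ^ m) \<longlonglongrightarrow> 0"
      by (intro tendsto_mult_right_zero LIMSEQ_power_zero) simp
  qed
  then have "(\<lambda>m. y - zs m) \<longlonglongrightarrow> y - 0" by (intro tendsto_diff tendsto_const)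
  then show "(\<lambda>i. f (zs i)) sums y" using partial by (simp add: sums_def)
qed

theorem zabreiko:
  fixes Y :: "'a::banach set" and \<rho> :: "'a \<Rightarrow> real"
  assumes Y: "closed Y" "subspace Y"
    and add: "\<And>x y. x \<in> Y \<Longrightarrow> y \<in> Y \<Longrightarrow> \<rho> (x + y) \<le> \<rho> x + \<rho> y"
    and scale: "\<And>c x. x \<in> Y \<Longrightarrow> \<rho> (c *\<^sub>R x) \<le> \<bar>c\<bar> * \<rho> x"
    and nonneg: "\<And>x. x \<in> Y \<Longrightarrow> 0 \<le> \<rho> x"
    and series: "\<And>xs y. (\<And>i. xs i \<in> Y) \<Longrightarrow> summable (\<lambda>i. \<rho> (xs i)) \<Longrightarrow> xs sums y \<Longrightarrow>
      \<rho> y \<le> (\<Sum>i. \<rho> (xs i))"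
  shows "\<exists>c\<ge>0. \<forall>y\<in>Y. \<rho> y \<le> c * norm y"
proof -
  obtain c where c: "c \<ge> 0" "\<forall>z\<in>Y. \<exists>w\<in>Y. \<rho> w \<le> c * norm z \<and> norm (z - w) \<le> norm z / 2"
    using zabreiko_step[OF Y add scale] by blast
  then obtain f where f: "\<And>z. z \<in> Y \<Longrightarrow> f z \<in> Y \<and> \<rho> (f z) \<le> c * norm z \<and> norm (z - f z) \<le> norm z / 2"
    by metis
  have "\<rho> y \<le> (2 * c) * norm y" if y: "y \<in> Y" for y
  proof -
    define zs where "zs i = ((\<lambda>z. z - f z) ^^ i) y" for i
    note zs = halving_iteration_sums[OF Y(2) _ y, of f, folded zs_def]
    have bound: "\<rho> (f (zs i)) \<le> c * norm y * (1/2) ^ i" for i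
    proof -
      have "\<rho> (f (zs i)) \<le> c * norm (zs i)" using f zs(1) by blast
      also have "\<dots> \<le> c * (norm y / 2 ^ i)" using zs(2) c(1) f by (intro mult_left_mono) auto
      finally show ?thesis by (simp add: power_divide)
    qed
    have geom: "summable (\<lambda>i. c * norm y * (1/2::real) ^ i)"
      by (intro summable_mult summable_geometric) simp
    have summable: "summable (\<lambda>i. \<rho> (f (zs i)))"
      by (rule summable_comparison_test'[OF geom]) (use bound nonneg f zs(1) in auto)
    then have "\<rho> y \<le> (\<Sum>i. \<rho> (f (zs i)))" using f zs by (intro series) auto
    also have "\<dots> \<le> (\<Sum>i. c * norm y * (1/2::real) ^ i)"
      by (rule suminf_le[OF bound summable geom])
    also have "\<dots> = c * norm y * 2" by (simp add: suminf_mult suminf_geometric)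
    finally show ?thesis by simp
  qed
  then show ?thesis using c(1) by (intro exI[of _ "2 * c"]) auto
qed

section \<open>The unconditional constant\<close>

lemma coord_rearrangement_sums:
  assumes U: "unconditional_fdd B" and x: "x \<in> cspan B" and p: "bij p"
  shows "(\<lambda>n. coord B x (p n)) sums x"
  using U x p coord_mem[OF unconditional_fdd_is_fdd[OF U] x] coord_sums[OF unconditional_fdd_is_fdd[OF U] x]
  unfolding unconditional_fdd_def by blast

definition uncond_norm :: "(nat \<Rightarrow> 'a::real_normed_vector set) \<Rightarrow> 'a \<Rightarrow> real" where
  "uncond_norm B x = Sup {norm (\<Sum>n\<in>S. coord B x n) | S. finite S}"

lemma bdd_above_uncond_norm:
  assumes U: "unconditional_fdd B" and x: "x \<in> cspan B"
  shows "bdd_above {norm (\<Sum>n\<in>S. coord B x n) | S. finite S}"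
proof -
  have "\<exists>N. \<forall>S. finite S \<and> S \<subseteq> {N..} \<longrightarrow> norm (\<Sum>n\<in>S. coord B x n) \<le> 1"
    by (rule finite_sums_small_of_rearrangements) (use coord_rearrangement_sums[OF U x] in auto)
  then obtain N where N: "\<And>S. finite S \<Longrightarrow> S \<subseteq> {N..} \<Longrightarrow> norm (\<Sum>n\<in>S. coord B x n) \<le> 1"
    by blast
  show ?thesis
  proof (rule bdd_aboveI)
    fix r assume "r \<in> {norm (\<Sum>n\<in>S. coord B x n) | S. finite S}"
    then obtain S where S: "finite S" "r = norm (\<Sum>n\<in>S. coord B x n)" by blast
    have "r \<le> norm (\<Sum>n\<in>S \<inter> {..<N}. coord B x n) + norm (\<Sum>n\<in>S - {..<N}. coord B x n)"
      using S norm_triangle_ineq sum.Int_Diff[OF S(1)] by metis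
    also have "norm (\<Sum>n\<in>S \<inter> {..<N}. coord B x n) \<le> (\<Sum>n<N. norm (coord B x n))"
      using norm_sum order_trans sum_mono2 by (metis (no_types) finite_lessThan inf_le2 norm_ge_zero)
    also have "norm (\<Sum>n\<in>S - {..<N}. coord B x n) \<le> 1" using S(1) by (intro N) auto
    finally show "r \<le> (\<Sum>n<N. norm (coord B x n)) + 1" by simp
  qed
qed

lemma norm_sum_coord_le_uncond_norm:
  "unconditional_fdd B \<Longrightarrow> x \<in> cspan B \<Longrightarrow> finite S \<Longrightarrow> norm (\<Sum>n\<in>S. coord B x n) \<le> uncond_norm B x"
  unfolding uncond_norm_def by (rule cSup_upper[OF _ bdd_above_uncond_norm]) blast+

lemma uncond_norm_leI:
  "(\<And>S. finite S \<Longrightarrow> norm (\<Sum>n\<in>S. coord B x n) \<le> c) \<Longrightarrow> uncond_norm B x \<le> c"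
  unfolding uncond_norm_def by (rule cSup_least) auto

lemma uncond_norm_nonneg: "unconditional_fdd B \<Longrightarrow> x \<in> cspan B \<Longrightarrow> 0 \<le> uncond_norm B x"
  using norm_sum_coord_le_uncond_norm[of B x "{}"] by simp

lemma norm_coord_le_uncond_norm:
  "unconditional_fdd B \<Longrightarrow> x \<in> cspan B \<Longrightarrow> norm (coord B x n) \<le> uncond_norm B x"
  using norm_sum_coord_le_uncond_norm[of B x "{n}"] by simp

lemma norm_le_uncond_norm:
  assumes U: "unconditional_fdd B" and x: "x \<in> cspan B"
  shows "norm x \<le> uncond_norm B x"
proof (rule LIMSEQ_le_const2)
  show "(\<lambda>N. norm (\<Sum>n<N. coord B x n)) \<longlonglongrightarrow> norm x"
    using coord_sums[OF unconditional_fdd_is_fdd[OF U] x] unfolding sums_def by (intro tendsto_norm)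
qed (use norm_sum_coord_le_uncond_norm[OF U x] in auto)

lemma uncond_norm_add:
  assumes U: "unconditional_fdd B" and x: "x \<in> cspan B" and y: "y \<in> cspan B"
  shows "uncond_norm B (x + y) \<le> uncond_norm B x + uncond_norm B y"
proof (rule uncond_norm_leI)
  fix S :: "nat set" assume S: "finite S"
  have "norm (\<Sum>n\<in>S. coord B (x + y) n) = norm ((\<Sum>n\<in>S. coord B x n) + (\<Sum>n\<in>S. coord B y n))"
    by (simp add: coord_add[OF unconditional_fdd_is_fdd[OF U] x y] sum.distrib)
  also have "\<dots> \<le> uncond_norm B x + uncond_norm B y"
    using norm_triangle_ineq norm_sum_coord_le_uncond_norm[OF U _ S] x y by (smt (verit))
  finally show "norm (\<Sum>n\<in>S. coord B (x + y) n) \<le> uncond_norm B x + uncond_norm B y" .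
qed

lemma uncond_norm_scale:
  assumes U: "unconditional_fdd B" and x: "x \<in> cspan B"
  shows "uncond_norm B (c *\<^sub>R x) \<le> \<bar>c\<bar> * uncond_norm B x"
proof (rule uncond_norm_leI)
  fix S :: "nat set" assume S: "finite S"
  have "norm (\<Sum>n\<in>S. coord B (c *\<^sub>R x) n) = \<bar>c\<bar> * norm (\<Sum>n\<in>S. coord B x n)"
    by (simp add: coord_scale[OF unconditional_fdd_is_fdd[OF U] x] scaleR_sum_right[symmetric])
  also have "\<dots> \<le> \<bar>c\<bar> * uncond_norm B x"
    using norm_sum_coord_le_uncond_norm[OF U x S] by (simp add: mult_left_mono)
  finally show "norm (\<Sum>n\<in>S. coord B (c *\<^sub>R x) n) \<le> \<bar>c\<bar> * uncond_norm B x" .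
qed

lemma sums_in_closed_subspace:
  fixes V :: "'a::real_normed_vector set"
  assumes "closed V" "subspace V" "\<And>i. f i \<in> V" "f sums l"
  shows "l \<in> V"
proof -
  have "(\<Sum>i<m. f i) \<in> V" for m by (intro subspace_sum[OF assms(2)]) (use assms(3) in auto)
  then show ?thesis by (rule closed_sequentially[OF assms(1)]) (use assms(4) in \<open>simp add: sums_def\<close>)
qed

lemma norm_partial_sum_coord_diff_le:
  "unconditional_fdd B \<Longrightarrow> x \<in> cspan B \<Longrightarrow> norm ((\<Sum>n<N. coord B x n) - x) \<le> 2 * uncond_norm B x"
  using norm_triangle_ineq4[of "\<Sum>n<N. coord B x n" x]
    norm_sum_coord_le_uncond_norm[of B x "{..<N}"] norm_le_uncond_norm[of B x] by simp

lemma suminf_norm_coord_remainders_tendsto_zero: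
  assumes U: "unconditional_fdd B" and xs: "\<And>i. x i \<in> cspan B"
    and sm: "summable (\<lambda>i. uncond_norm B (x i))"
  shows "(\<lambda>N. \<Sum>i. norm ((\<Sum>n<N. coord B (x i) n) - x i)) \<longlonglongrightarrow> 0"
proof -
  define a where "a i N = norm ((\<Sum>n<N. coord B (x i) n) - x i)" for i N
  have a_lim: "(\<lambda>N. a i N) \<longlonglongrightarrow> 0" for i
  proof -
    have "(\<lambda>N. (\<Sum>n<N. coord B (x i) n) - x i) \<longlonglongrightarrow> x i - x i"
      using coord_sums[OF unconditional_fdd_is_fdd[OF U] xs] unfolding sums_def by (intro tendsto_intros)
    then show ?thesis unfolding a_def using tendsto_norm_zero by fastforce
  qed
  have "eventually (\<lambda>N. summable (\<lambda>i. norm (a i N))) sequentially \<and>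
      summable (\<lambda>i. norm ((\<lambda>_. 0::real) i)) \<and> (\<lambda>N. \<Sum>i. a i N) \<longlonglongrightarrow> (\<Sum>i. (0::real))"
  proof (rule tannerys_theorem[OF a_lim _ summable_mult[OF sm, of 2]])
    show "\<forall>\<^sub>F (i, N) in sequentially \<times>\<^sub>F sequentially. norm (a i N) \<le> 2 * uncond_norm B (x i)"
      by (rule always_eventually) (simp add: a_def norm_partial_sum_coord_diff_le[OF U xs])
  qed simp
  then show ?thesis by (simp add: a_def)
qed

lemma coord_suminf:
  fixes B :: "nat \<Rightarrow> 'a::banach set"
  assumes U: "unconditional_fdd B" and xs: "\<And>i. x i \<in> cspan B"
    and sm: "summable (\<lambda>i. uncond_norm B (x i))" and xy: "x sums y"
  shows "coord B y = (\<lambda>n. \<Sum>i. coord B (x i) n)"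
proof -
  have fdd: "is_fdd B" using U by (rule unconditional_fdd_is_fdd)
  define b where "b n = (\<Sum>i. coord B (x i) n)" for n
  have cs: "summable (\<lambda>i. coord B (x i) n)" for n
    by (rule summable_comparison_test'[OF sm]) (rule norm_coord_le_uncond_norm[OF U xs])
  have b: "b n \<in> B n" for n
    unfolding b_def
    by (rule sums_in_closed_subspace[OF closed_fdd_component[OF fdd] subspace_fdd_component[OF fdd]
          coord_mem[OF fdd xs] summable_sums[OF cs]])
  have "norm ((\<Sum>n<N. b n) - y) \<le> (\<Sum>i. norm ((\<Sum>n<N. coord B (x i) n) - x i))" for N
  proof -
    have "summable (\<lambda>i. norm ((\<Sum>n<N. coord B (x i) n) - x i))"
      by (rule summable_comparison_test'[OF summable_mult[OF sm, of 2]])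
         (simp add: norm_partial_sum_coord_diff_le[OF U xs])
    moreover have "(\<Sum>n<N. b n) = (\<Sum>i. \<Sum>n<N. coord B (x i) n)"
      unfolding b_def by (rule suminf_sum[symmetric]) (use cs in auto)
    then have "(\<Sum>n<N. b n) - y = (\<Sum>i. (\<Sum>n<N. coord B (x i) n) - x i)"
      using suminf_diff[OF summable_sum[OF cs] sums_summable[OF xy]] sums_unique[OF xy] by simp
    ultimately show ?thesis using summable_norm by simp
  qed
  then have "(\<lambda>N. (\<Sum>n<N. b n) - y) \<longlonglongrightarrow> 0"
    by (intro Lim_null_comparison[OF always_eventually
          suminf_norm_coord_remainders_tendsto_zero[OF U xs sm]]) simp
  then have "(\<lambda>N. ((\<Sum>n<N. b n) - y) + y) \<longlonglongrightarrow> 0 + y" by (intro tendsto_add tendsto_const)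
  then have "b sums y" by (simp add: sums_def)
  then show ?thesis unfolding b_def[symmetric] by (rule coord_unique[OF fdd b])
qed

lemma uncond_norm_suminf_le:
  fixes B :: "nat \<Rightarrow> 'a::banach set"
  assumes U: "unconditional_fdd B" and xs: "\<And>i. x i \<in> cspan B"
    and sm: "summable (\<lambda>i. uncond_norm B (x i))" and xy: "x sums y"
  shows "uncond_norm B y \<le> (\<Sum>i. uncond_norm B (x i))"
proof (rule uncond_norm_leI)
  fix S :: "nat set" assume S: "finite S"
  have sn: "summable (\<lambda>i. norm (\<Sum>n\<in>S. coord B (x i) n))"
    by (rule summable_comparison_test'[OF sm]) (use norm_sum_coord_le_uncond_norm[OF U xs S] in auto)
  have "(\<Sum>n\<in>S. coord B y n) = (\<Sum>i. \<Sum>n\<in>S. coord B (x i) n)"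
    unfolding coord_suminf[OF U xs sm xy]
    by (rule suminf_sum[symmetric]) (rule summable_comparison_test'[OF sm norm_coord_le_uncond_norm[OF U xs]])
  then have "norm (\<Sum>n\<in>S. coord B y n) \<le> (\<Sum>i. norm (\<Sum>n\<in>S. coord B (x i) n))"
    using summable_norm[OF sn] by simp
  also have "\<dots> \<le> (\<Sum>i. uncond_norm B (x i))"
    by (rule suminf_le[OF _ sn sm]) (rule norm_sum_coord_le_uncond_norm[OF U xs S])
  finally show "norm (\<Sum>n\<in>S. coord B y n) \<le> (\<Sum>i. uncond_norm B (x i))" .
qed

lemma uncond_norm_bounded:
  fixes B :: "nat \<Rightarrow> 'a::banach set"
  assumes U: "unconditional_fdd B"
  shows "\<exists>c\<ge>0. \<forall>y\<in>cspan B. uncond_norm B y \<le> c * norm y"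
proof (rule zabreiko[OF is_fddD(1)[OF unconditional_fdd_is_fdd[OF U]] subspace_cspan])
  fix xs y assume "\<And>i. xs i \<in> cspan B" "summable (\<lambda>i. uncond_norm B (xs i))" "xs sums y"
  then show "uncond_norm B y \<le> (\<Sum>i. uncond_norm B (xs i))" by (rule uncond_norm_suminf_le[OF U])
qed (use uncond_norm_add[OF U] uncond_norm_scale[OF U] uncond_norm_nonneg[OF U] in auto)

definition is_unconditional_constant :: "(nat \<Rightarrow> 'a::real_normed_vector set) \<Rightarrow> real \<Rightarrow> bool" where
  "is_unconditional_constant B K \<longleftrightarrow> (\<forall>M b S. (\<forall>n. b n \<in> B n) \<longrightarrow> S \<subseteq> {..<M} \<longrightarrow> norm (\<Sum>n\<in>S. b n) \<le> K * norm (\<Sum>n<M. b n))"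

lemma unconditional_constant:
  fixes B :: "nat \<Rightarrow> 'a::banach set"
  assumes U: "unconditional_fdd B"
  obtains K where "K \<ge> 1" "is_unconditional_constant B K"
proof -
  have fdd: "is_fdd B" using U by (rule unconditional_fdd_is_fdd)
  obtain c where c: "c \<ge> 0" "\<And>y. y \<in> cspan B \<Longrightarrow> uncond_norm B y \<le> c * norm y"
    using uncond_norm_bounded[OF U] by blast
  have "norm (\<Sum>n\<in>S. b n) \<le> max 1 c * norm (\<Sum>n<M. b n)"
    if b: "\<forall>n. b n \<in> B n" and S: "S \<subseteq> {..<M}" for M b S
  proof -
    define b' where "b' n = (if n < M then b n else 0)" for n
    have b': "b' n \<in> B n" for n unfolding b'_def using b subspace_0[OF subspace_fdd_component[OF fdd]] by auto
    have eq: "(\<Sum>n<M. b n) = (\<Sum>n<M. b' n)" unfolding b'_def by simp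
    have y: "(\<Sum>n<M. b n) \<in> cspan B" using b by (intro sum_in_cspan) blast
    have coord_eq: "coord B (\<Sum>n<M. b n) = b'"
      unfolding eq by (rule coord_finite_sum[OF fdd b']) (simp add: b'_def)
    have "(\<Sum>n\<in>S. b n) = (\<Sum>n\<in>S. coord B (\<Sum>n<M. b n) n)"
      unfolding coord_eq using S by (intro sum.cong) (auto simp: b'_def)
    also have "norm \<dots> \<le> c * norm (\<Sum>n<M. b n)"
      using norm_sum_coord_le_uncond_norm[OF U y] c(2)[OF y] S finite_subset by (metis finite_lessThan order_trans)
    also have "\<dots> \<le> max 1 c * norm (\<Sum>n<M. b n)" by (intro mult_right_mono) auto
    finally show ?thesis .
  qed
  then show ?thesis using that[of "max 1 c"] unfolding is_unconditional_constant_def by simp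
qed

section \<open>Blockings\<close>

lemma span_UN_span: "span (\<Union>n\<in>I. span (S n)) = span (\<Union>n\<in>I. S n)"
proof (rule subset_antisym)
  have "(\<Union>n\<in>I. span (S n)) \<subseteq> span (\<Union>n\<in>I. S n)"
    using span_mono[of "S _" "\<Union>n\<in>I. S n"] by blast
  then show "span (\<Union>n\<in>I. span (S n)) \<subseteq> span (\<Union>n\<in>I. S n)"
    using span_mono span_span by blast
  show "span (\<Union>n\<in>I. S n) \<subseteq> span (\<Union>n\<in>I. span (S n))"
    by (rule span_mono) (use span_superset in blast)
qed

lemma in_span_UN_subspaces_sum:
  assumes I: "finite I" and sub: "\<And>n. subspace (B n)" and x: "x \<in> span (\<Union>n\<in>I. B n)"
  obtains \<beta> where "\<And>n. \<beta> n \<in> B n" "x = (\<Sum>n\<in>I. \<beta> n)"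
proof -
  have "\<exists>\<beta>. (\<forall>n. \<beta> n \<in> B n) \<and> x = (\<Sum>n\<in>I. \<beta> n)"
    using I x
  proof (induction I arbitrary: x rule: finite_induct)
    case empty
    then show ?case using sub subspace_0 by (intro exI[of _ "\<lambda>_. 0"]) auto
  next
    case (insert i I)
    then obtain a y where a: "a \<in> span (B i)" and y: "y \<in> span (\<Union>n\<in>I. B n)" and x: "x = a + y"
      unfolding UN_insert span_Un by blast
    obtain \<beta> where \<beta>: "\<forall>n. \<beta> n \<in> B n" "y = (\<Sum>n\<in>I. \<beta> n)" using insert.IH[OF y] by blast
    have "(\<Sum>n\<in>I. (\<beta>(i := a)) n) = (\<Sum>n\<in>I. \<beta> n)" using insert.hyps(2) by (intro sum.cong) auto
    then have "x = (\<Sum>n\<in>insert i I. (\<beta>(i := a)) n)" using insert.hyps x \<beta>(2) by simp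
    moreover have "a \<in> B i" using a span_eq_iff[THEN iffD2, OF sub[of i]] by simp
    then have "\<forall>n. (\<beta>(i := a)) n \<in> B n" using \<beta>(1) by simp
    ultimately show ?case by blast
  qed
  then show ?thesis using that by blast
qed

lemma blocking_subset_tail: "blocking B k j \<subseteq> span (\<Union>n\<in>{k j..}. B n)"
  unfolding blocking_def by (rule span_mono) auto

lemma blocking_subset_cspan: "blocking B k j \<subseteq> cspan B"
  unfolding blocking_def by (rule span_subset_cspan)

lemma sum_blocks:
  fixes k :: "nat \<Rightarrow> nat"
  assumes k: "strict_mono k" "k 0 = 0"
  shows "(\<Sum>j<J. \<Sum>n\<in>{k j..<k (Suc j)}. c n) = (\<Sum>n<k J. c n)"
proof (induction J)
  case (Suc J)
  have "k J \<le> k (Suc J)" using strict_mono_less_eq[OF k(1)] by simp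
  then have "(\<Sum>n<k (Suc J). c n) = (\<Sum>n<k J. c n) + (\<Sum>n\<in>{k J..<k (Suc J)}. c n)"
    using sum.atLeastLessThan_concat[OF le0, of "k J" "k (Suc J)" c] unfolding lessThan_atLeast0 by simp
  then show ?case using Suc by simp
qed (simp add: k(2))

lemma cspan_blocking:
  assumes k: "strict_mono k" "k 0 = 0"
  shows "cspan (blocking B k) = cspan B"
proof -
  have "B n \<subseteq> blocking B k (block_index k n)" for n
  proof -
    have "n \<in> {k (block_index k n)..<k (Suc (block_index k n))}" using block_index[OF k, of n] by simp
    then have "B n \<subseteq> (\<Union>m\<in>{k (block_index k n)..<k (Suc (block_index k n))}. B m)" by blast
    then show ?thesis unfolding blocking_def using span_superset by blast
  qed
  then have "(\<Union>n. B n) \<subseteq> (\<Union>j. blocking B k j)" by blast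
  then have "(\<Union>n. B n) \<subseteq> span (\<Union>j. blocking B k j)" using span_superset by (rule order_trans)
  moreover have "(\<Union>j. blocking B k j) \<subseteq> span (\<Union>n. B n)"
    unfolding blocking_def by (intro UN_least span_mono) blast
  ultimately have "span (\<Union>j. blocking B k j) = span (\<Union>n. B n)" by (simp add: span_eq)
  then show ?thesis unfolding cspan_def by simp
qed

lemma expansion_zero_of_absolute_estimate:
  fixes d :: "nat \<Rightarrow> 'a::banach_lattice"
  assumes est: "\<And>m. norm (\<Sum>n<m. labs (d n)) \<le> A * norm (\<Sum>n<m. d n)" and d: "d sums 0"
  shows "d n = 0"
proof -
  have "(\<lambda>m. A * norm (\<Sum>j<m. d j)) \<longlonglongrightarrow> A * norm (0::'a)"
    using d unfolding sums_def by (intro tendsto_intros)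
  moreover have "norm (d n) \<le> A * norm (\<Sum>j<m. d j)" if "m \<ge> Suc n" for m
  proof -
    have "labs (d n) \<le> (\<Sum>j<m. labs (d j))" by (rule labs_le_sum_labs) (use that in auto)
    then have "norm (labs (d n)) \<le> norm (\<Sum>j<m. labs (d j))" by (rule norm_mono_nonneg[OF labs_nonneg])
    then show ?thesis using est[of m] by simp
  qed
  ultimately have "norm (d n) \<le> 0" by (intro LIMSEQ_le_const) auto
  then show ?thesis by simp
qed

lemma absolute_fdd_blockingI:
  assumes B: "is_fdd B" and k: "strict_mono k" "k 0 = 0"
    and est: "\<And>m xs. (\<And>j. xs j \<in> blocking B k j) \<Longrightarrow>
      norm (\<Sum>j<m. labs (xs j)) \<le> A * norm (\<Sum>j<m. xs j)"
    and A: "A \<ge> 1"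
  shows "absolute_fdd (blocking B k)"
proof -
  obtain S where S: "\<And>n. finite (S n)" "\<And>n. B n = span (S n)"
    using fdd_component_generators[OF B] by blast
  \<comment> \<open>uniqueness of block expansions comes from the absolute estimate, not from continuity
    of the coordinate functionals of \<open>B\<close>\<close>
  have unique: "\<exists>!xs. (\<forall>j. xs j \<in> blocking B k j) \<and> xs sums x" if x: "x \<in> cspan (blocking B k)" for x
  proof (rule ex1I)
    have x: "x \<in> cspan B" using x unfolding cspan_blocking[OF k] .
    define y where "y j = (\<Sum>n\<in>{k j..<k (Suc j)}. coord B x n)" for j
    have "(\<lambda>J. \<Sum>n<k J. coord B x n) \<longlonglongrightarrow> x"
      using LIMSEQ_subseq_LIMSEQ[OF coord_sums[OF B x, unfolded sums_def] k(1)] by (simp add: o_def)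
    then have "y sums x" unfolding sums_def y_def sum_blocks[OF k] .
    moreover have "y j \<in> blocking B k j" for j
      unfolding y_def blocking_def by (intro span_sum span_base) (use coord_mem[OF B x] in blast)
    ultimately show "(\<forall>j. y j \<in> blocking B k j) \<and> y sums x" by blast
    fix z assume z: "(\<forall>j. z j \<in> blocking B k j) \<and> z sums x"
    have diff: "z j - y j \<in> blocking B k j" for j
      using z \<open>y j \<in> blocking B k j\<close> subspace_diff[OF subspace_span] unfolding blocking_def by blast
    have "(\<lambda>j. z j - y j) sums (x - x)" using z \<open>y sums x\<close> by (intro sums_diff) auto
    then have "z j - y j = 0" for j by (intro expansion_zero_of_absolute_estimate[OF est[OF diff]]) simp
    then show "z = y" by (simp add: fun_eq_iff)
  qed
  have finite_dim: "\<exists>T. finite T \<and> blocking B k j = span T" for j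
    using S span_UN_span[of S] unfolding blocking_def by (intro exI[of _ "\<Union>n\<in>{k j..<k (Suc j)}. S n"]) auto
  have "is_fdd (blocking B k)"
    unfolding is_fdd_def fdd_of_def
  proof (intro conjI allI ballI)
    show "closed (cspan (blocking B k))" by (simp add: cspan_def)
  qed (simp_all add: subspace_cspan component_subset_cspan finite_dim unique)
  then show ?thesis unfolding absolute_fdd_def using est A by blast
qed

lemma exists_interlaced_sequences:
  fixes N :: "nat \<Rightarrow> nat \<Rightarrow> nat" and T :: "nat \<Rightarrow> nat \<Rightarrow> nat \<Rightarrow> nat"
  obtains k P where "strict_mono k" "k 0 = 0" "mono P" "P 0 = 0"
    "\<And>j. N (Suc j) (P (Suc j)) \<le> k (Suc j)" "\<And>j. T j (k j) (k (Suc j)) \<le> P (Suc (Suc j))"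
proof -
  \<comment> \<open>the state at stage \<open>j\<close> is \<open>(k j, P j, P (Suc j))\<close>\<close>
  define step where "step j s = (let k' = max (Suc (fst s)) (N (Suc j) (snd (snd s)))
    in (k', snd (snd s), max (snd (snd s)) (T j (fst s) k')))" for j and s :: "nat \<times> nat \<times> nat"
  define st where "st = rec_nat (0, 0, 0) step"
  define k where "k j = fst (st j)" for j
  define P where "P j = fst (snd (st j))" for j
  have st_Suc: "st (Suc j) = step j (st j)" for j by (simp add: st_def)
  have P_Suc: "P (Suc j) = snd (snd (st j))" for j by (simp add: P_def st_Suc step_def Let_def)
  have k_Suc: "k (Suc j) = max (Suc (k j)) (N (Suc j) (P (Suc j)))" for j
    by (simp add: k_def P_Suc st_Suc step_def Let_def)
  have P_SS: "P (Suc (Suc j)) = max (P (Suc j)) (T j (k j) (k (Suc j)))" for j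
    by (simp add: P_Suc[of "Suc j"] st_Suc step_def Let_def k_Suc) (simp add: k_def P_Suc)
  have P0: "P 0 = 0" "P (Suc 0) = 0" by (simp_all add: P_def P_Suc st_def step_def Let_def)
  show ?thesis
  proof
    show "strict_mono k" unfolding strict_mono_Suc_iff k_Suc by (simp add: less_max_iff_disj)
    show "k 0 = 0" by (simp add: k_def st_def)
    show "mono P" unfolding mono_iff_le_Suc
    proof
      fix j show "P j \<le> P (Suc j)" using P0 P_SS by (cases j) auto
    qed
  qed (simp_all add: P0 k_Suc P_SS)
qed

lemma exists_blocking_with_small_heads_and_tails:
  fixes C B :: "nat \<Rightarrow> 'a::banach_lattice set"
  assumes C: "absolute_fdd C" and sh: "shrinking_fdd B" and BC: "cspan B \<subseteq> cspan C"
  obtains k P where "strict_mono k" "k 0 = 0" "mono P"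
    "\<And>j x. x \<in> blocking B k j \<Longrightarrow> norm (fdd_proj C (P j) x) \<le> (1/2)^j * norm x"
    "\<And>j x. x \<in> blocking B k j \<Longrightarrow> norm (x - fdd_proj C (P (Suc (Suc j))) x) \<le> (1/2)^j * norm x"
proof -
  obtain S where S: "\<And>n. finite (S n)" "\<And>n. B n = span (S n)"
    using fdd_component_generators[OF shrinking_fdd_is_fdd[OF sh]] by blast
  have span_S: "span (\<Union>n\<in>I. S n) = span (\<Union>n\<in>I. B n)" for I
    unfolding S(2) span_UN_span ..
  define N where "N j p = (SOME n0. \<forall>n\<ge>n0. \<forall>x\<in>span (\<Union>i\<in>{n..}. B i).
    norm (fdd_proj C p x) \<le> (1/2)^j * norm x)" for j p
  have N: "\<forall>n\<ge>N j p. \<forall>x\<in>span (\<Union>i\<in>{n..}. B i). norm (fdd_proj C p x) \<le> (1/2)^j * norm x" for j p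
    unfolding N_def using fdd_proj_eventually_small_on_tails[OF C sh BC, of "(1/2)^j" p]
    by (intro someI_ex[where P="\<lambda>n0. \<forall>n\<ge>n0. _ n"]) (simp add: eventually_sequentially)
  define T where "T j a b = (SOME p0. \<forall>p\<ge>p0. \<forall>x\<in>span (\<Union>n\<in>{a..<b}. S n).
    norm (x - fdd_proj C p x) \<le> (1/2)^j * norm x)" for j a b
  have T: "\<forall>p\<ge>T j a b. \<forall>x\<in>span (\<Union>n\<in>{a..<b}. S n). norm (x - fdd_proj C p x) \<le> (1/2)^j * norm x"
    for j a b
  proof -
    have "span (\<Union>n\<in>{a..<b}. S n) \<subseteq> cspan C"
      unfolding span_S using span_subset_cspan BC by blast
    then show ?thesis unfolding T_def
      using fdd_proj_eventually_close_on_finite_span[OF absolute_fdd_is_fdd[OF C], of "\<Union>n\<in>{a..<b}. S n" "(1/2)^j"] S(1)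
      by (intro someI_ex[where P="\<lambda>p0. \<forall>p\<ge>p0. _ p"]) (simp add: eventually_sequentially)
  qed
  obtain k P where k: "strict_mono k" "k 0 = 0" and P: "mono P" "P 0 = 0"
    and kN: "\<And>j. N (Suc j) (P (Suc j)) \<le> k (Suc j)" and PT: "\<And>j. T j (k j) (k (Suc j)) \<le> P (Suc (Suc j))"
    by (rule exists_interlaced_sequences[of N T]) blast
  show ?thesis
  proof (rule that[OF k P(1)])
    fix j x assume x: "x \<in> blocking B k j"
    show "norm (fdd_proj C (P j) x) \<le> (1/2)^j * norm x"
    proof (cases j)
      case (Suc i)
      then show ?thesis using N[of j "P j"] kN[of i] x blocking_subset_tail by blast
    qed (simp add: P(2))
    have "x \<in> span (\<Union>n\<in>{k j..<k (Suc j)}. S n)" using x unfolding blocking_def span_S .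
    then show "norm (x - fdd_proj C (P (Suc (Suc j))) x) \<le> (1/2)^j * norm x"
      using T[of j "k j" "k (Suc j)"] PT[of j] by blast
  qed
qed

lemma norm_sum_subset_blocks_le:
  fixes B :: "nat \<Rightarrow> 'a::real_normed_vector set" and I :: "nat \<Rightarrow> nat set"
  assumes K: "is_unconditional_constant B K"
    and B0: "\<And>n. 0 \<in> B n" and disj: "disjoint_family_on I {..<m}" and I: "\<And>j. j < m \<Longrightarrow> I j \<subseteq> {..<M}"
    and \<beta>: "\<And>j n. \<beta> j n \<in> B n" and T: "T \<subseteq> {..<m}"
  shows "norm (\<Sum>j\<in>T. \<Sum>n\<in>I j. \<beta> j n) \<le> K * norm (\<Sum>j<m. \<Sum>n\<in>I j. \<beta> j n)"
proof -
  have \<beta>': "\<And>j n. j \<in> {..<m} \<Longrightarrow> \<beta> j n \<in> B n" using \<beta> by blast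
  obtain b where b: "\<And>n. b n \<in> B n" "\<And>j n. j \<in> {..<m} \<Longrightarrow> n \<in> I j \<Longrightarrow> b n = \<beta> j n"
    "\<And>n. n \<notin> (\<Union>j\<in>{..<m}. I j) \<Longrightarrow> b n = 0"
    using glue_on_disjoint_windows[of I "{..<m}" \<beta> B, OF disj \<beta>' B0] by blast
  have fin: "finite (I j)" if "j < m" for j by (rule finite_subset[OF I[OF that]]) simp
  have "finite T" by (rule finite_subset[OF T]) simp
  then have "(\<Sum>n\<in>(\<Union>j\<in>T. I j). b n) = (\<Sum>j\<in>T. \<Sum>n\<in>I j. \<beta> j n)"
    by (rule sum_over_disjoint_windows[OF _ _ disjoint_family_on_mono[OF T disj]]) (use T fin b(2) in auto)
  moreover have "(\<Sum>n<M. b n) = (\<Sum>j<m. \<Sum>n\<in>I j. \<beta> j n)"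
  proof -
    have "(\<Sum>n<M. b n) = (\<Sum>n\<in>(\<Union>j\<in>{..<m}. I j). b n)"
      by (rule sum.mono_neutral_right) (use I b(3) in auto)
    also have "\<dots> = (\<Sum>j<m. \<Sum>n\<in>I j. \<beta> j n)"
      by (rule sum_over_disjoint_windows) (use fin disj b(2) in auto)
    finally show ?thesis .
  qed
  moreover have "(\<Union>j\<in>T. I j) \<subseteq> {..<M}" using T I by blast
  ultimately show ?thesis using K b(1) unfolding is_unconditional_constant_def by metis
qed

lemma disjoint_family_on_blocks:
  fixes k :: "nat \<Rightarrow> nat"
  assumes k: "strict_mono k"
  shows "disjoint_family_on (\<lambda>j. {k j..<k (Suc j)}) UNIV"
  unfolding disjoint_family_on_def
proof (intro ballI impI)
  fix i j :: nat assume "i \<noteq> j"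
  then have "k (Suc i) \<le> k j \<or> k (Suc j) \<le> k i"
    using strict_mono_less_eq[OF k] by (cases "i < j") auto
  then show "{k i..<k (Suc i)} \<inter> {k j..<k (Suc j)} = {}" by auto
qed

lemma norm_sum_labs_blocks_le:
  fixes C B :: "nat \<Rightarrow> 'a::banach_lattice set"
  assumes C: "absolute_fdd C" and fdd: "is_fdd B" and BC: "cspan B \<subseteq> cspan C"
    and K1: "K \<ge> 1"
    and K: "is_unconditional_constant B K"
    and k: "strict_mono k" and P: "mono P"
    and head: "\<And>j x. x \<in> blocking B k j \<Longrightarrow> norm (fdd_proj C (P j) x) \<le> (1/2)^j * norm x"
    and tail: "\<And>j x. x \<in> blocking B k j \<Longrightarrow> norm (x - fdd_proj C (P (Suc (Suc j))) x) \<le> (1/2)^j * norm x"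
    and xs: "\<And>j. xs j \<in> blocking B k j"
  shows "norm (\<Sum>j<m. labs (xs j)) \<le> (10 * absolute_constant C * K + 4 * K) * norm (\<Sum>j<m. xs j)"
proof -
  define R where "R = K * norm (\<Sum>j<m. xs j)"
  have R: "R \<ge> 0" using K1 by (simp add: R_def)
  have "\<exists>\<beta>. (\<forall>n. \<beta> n \<in> B n) \<and> xs j = (\<Sum>n\<in>{k j..<k (Suc j)}. \<beta> n)" for j
  proof -
    have "xs j \<in> span (\<Union>n\<in>{k j..<k (Suc j)}. B n)" using xs[of j] unfolding blocking_def .
    then obtain \<beta> where "\<And>n. \<beta> n \<in> B n" "xs j = (\<Sum>n\<in>{k j..<k (Suc j)}. \<beta> n)"
      by (rule in_span_UN_subspaces_sum[OF finite_atLeastLessThan subspace_fdd_component[OF fdd]]) blast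
    then show ?thesis by blast
  qed
  then obtain \<beta> where "\<forall>j. (\<forall>n. \<beta> j n \<in> B n) \<and> xs j = (\<Sum>n\<in>{k j..<k (Suc j)}. \<beta> j n)"
    using choice[of "\<lambda>j \<beta>. (\<forall>n. \<beta> n \<in> B n) \<and> xs j = (\<Sum>n\<in>{k j..<k (Suc j)}. \<beta> n)"] by blast
  then have \<beta>: "\<And>j n. \<beta> j n \<in> B n" "\<And>j. xs j = (\<Sum>n\<in>{k j..<k (Suc j)}. \<beta> j n)" by blast+
  have subsums: "norm (\<Sum>j\<in>T. xs j) \<le> R" if "T \<subseteq> {..<m}" for T
  proof -
    have "disjoint_family_on (\<lambda>j. {k j..<k (Suc j)}) {..<m}"
      by (rule disjoint_family_on_mono[OF _ disjoint_family_on_blocks[OF k]]) simp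
    moreover have "{k j..<k (Suc j)} \<subseteq> {..<k m}" if "j < m" for j
      using strict_mono_less_eq[OF k, of "Suc j" m] that by auto
    ultimately show ?thesis
      unfolding R_def \<beta>(2)
      by (intro norm_sum_subset_blocks_le[OF K subspace_0[OF subspace_fdd_component[OF fdd]] _ _ \<beta>(1) that]) auto
  qed
  have xs_C: "xs j \<in> cspan C" for j using xs blocking_subset_cspan BC by blast
  have err: "(\<Sum>j<m. norm (xs j - (\<Sum>n\<in>{P j..<P (Suc (Suc j))}. coord C (xs j) n))) \<le> 4 * R"
    by (rule window_error_sum_le[OF P R head[OF xs] tail[OF xs]]) (use subsums[of "{_}"] in auto)
  have "norm (\<Sum>j<m. labs (xs j)) \<le> 2 * absolute_constant C * (R + 4 * R) + 4 * R"
    using absolute_estimate_of_window_approximation[OF C P xs_C subsums err] .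
  then show ?thesis by (simp add: R_def algebra_simps)
qed

theorem proposition4p7:
  fixes C B :: "nat \<Rightarrow> 'a::banach_lattice set"
  assumes "absolute_fdd C"
    and "unconditional_fdd B" and "shrinking_fdd B"
    and "cspan B \<subseteq> cspan C"
  shows "\<exists>k. strict_mono k \<and> k 0 = 0 \<and> absolute_fdd (blocking B k)"
proof -
  note C = assms(1) and U = assms(2) and sh = assms(3) and BC = assms(4)
  obtain K where K1: "K \<ge> 1" and K: "is_unconditional_constant B K"
    by (rule unconditional_constant[OF U])
  obtain k P where k: "strict_mono k" "k 0 = 0" and P: "mono P"
    and head: "\<And>j x. x \<in> blocking B k j \<Longrightarrow> norm (fdd_proj C (P j) x) \<le> (1/2)^j * norm x"
    and tail: "\<And>j x. x \<in> blocking B k j \<Longrightarrow> norm (x - fdd_proj C (P (Suc (Suc j))) x) \<le> (1/2)^j * norm x"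
    using exists_blocking_with_small_heads_and_tails[OF C sh BC] by blast
  have "absolute_fdd (blocking B k)"
  proof (rule absolute_fdd_blockingI[OF unconditional_fdd_is_fdd[OF U] k])
    show "norm (\<Sum>j<m. labs (xs j)) \<le> (10 * absolute_constant C * K + 4 * K) * norm (\<Sum>j<m. xs j)"
      if "\<And>j. xs j \<in> blocking B k j" for m xs
      by (rule norm_sum_labs_blocks_le[OF C unconditional_fdd_is_fdd[OF U] BC K1 K k(1) P head tail that])
    have "0 \<le> 10 * absolute_constant C * K" using absolute_constant_ge_1[OF C] K1 by simp
    then show "10 * absolute_constant C * K + 4 * K \<ge> 1" using K1 by linarith
  qed
  then show ?thesis using k by blast
qed

end
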